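(* Let $T=(T,\mu,\iota)$ be a normal lax double monad on an equipment $\mathcal K$. For every vertical morphism $f\colon A\to C$ in $\mathcal K$, the cell $\iota_{f_*}$ (where $f_*\colon A\nrightarrow C$ is the companion of $f$) satisfies the right Beck–Chevalley condition.
   Context: Double categories: a double category has objects, vertical morphisms (composition $\circ$), horizontal morphisms $J\colon A\nrightarrow B$ (composition $\odot$ in diagrammatic order, units $1_A$, weakly associative/unital) and cells with horizontal source $J\colon A\nrightarrow B$, horizontal target $K\colon C\nrightarrow D$, vertical sides $f\colon A\to C$, $g\colon B\to D$; horizontal cells are those with identity vertical sides. A cell $\phi\colon J\Rightarrow K$ with sides $f,g$ is cartesian if every cell $H\Rightarrow K$ with sides $f\circ h,g\circ k$ factors uniquely through $\phi$ via a cell $H\Rightarrow J$ with sides $h,k$; opcartesian dually. The companion $f_*\colon A\nrightarrow C$ of $f\colon A\to C$ is the restriction of $1_C$ along $f,\mathrm{id}_C$, given by a cartesian cell $f_*\Rightarrow 1_C$ with sides $f,\mathrm{id}_C$, equivalently by an opcartesian cell $1_A\Rightarrow f_*$ with sides $\mathrm{id}_A,f$. An equipment is a double category with all companions and conjoints. A normal lax double monad $(T,\mu,\iota)$ on $\mathcal K$: a lax double functor $T\colon\mathcal K\to\mathcal K$ preserving vertical composition, identities and horizontal units strictly and horizontal composition up to coherent compositor cells $TJ\odot TH\Rightarrow T(J\odot H)$, with double transformations $\mu\colon T^2\Rightarrow T$, $\iota\colon\mathrm{id}\Rightarrow T$ satisfying the monad axioms; $\iota$ consists of vertical morphisms $\iota_A\colon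 A\to TA$ and cells $\iota_J\colon J\Rightarrow TJ$ with vertical sides $\iota_A,\iota_B$, natural, compatible with compositors, with $\iota_{1_A}=1_{\iota_A}$. Right Beck–Chevalley condition: for $J\colon A\nrightarrow B$ let $\iota_{J*}\colon J\odot\iota_{B*}\Rightarrow\iota_{A*}\odot TJ$ be the horizontal cell obtained as the horizontal composite of the opcartesian cell $1_A\Rightarrow\iota_{A*}$ (sides $\mathrm{id}_A,\iota_A$), the cell $\iota_J$, and the cartesian cell $\iota_{B*}\Rightarrow 1_{TB}$ (sides $\iota_B,\mathrm{id}_{TB}$). We say $\iota_J$ satisfies the right Beck–Chevalley condition if $\iota_{J*}$ is invertible. *)

theory Defs
  imports Main
begin

section \<open>Pseudo double categories (weak horizontal, strict vertical composition)\<close>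

text \<open>Objects 'o, vertical morphisms 'v, horizontal morphisms 'h, cells 'c, each
relativised to a carrier set.  Vertical composition is written applicatively
(vcmp g f = g o f); horizontal composition is diagrammatic (hcmp J H = J (.) H for
J : A -|-> B, H : B -|-> C).  A cell phi has horizontal source src phi, horizontal
target tgt phi and vertical sides lft phi, rgt phi.  cv psi phi is vertical composition
of cells (phi on top), ch phi psi horizontal composition (diagrammatic), cid J the identity
cell on J, cun f the horizontal unit cell 1_f : 1_A => 1_C on f : A -> C; asc, lu, ru are
the associator (J.H).K => J.(H.K) and unitors 1_A.J => J, J.1_B => J.\<close>

record ('o,'v,'h,'c) dblcat =
  Ob :: "'o set"
  Ver :: "'v set"
  Hor :: "'h set"
  Cel :: "'c set"
  vdom :: "'v \<Rightarrow> 'o"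
  vcod :: "'v \<Rightarrow> 'o"
  vcmp :: "'v \<Rightarrow> 'v \<Rightarrow> 'v"
  vid :: "'o \<Rightarrow> 'v"
  hdom :: "'h \<Rightarrow> 'o"
  hcod :: "'h \<Rightarrow> 'o"
  hcmp :: "'h \<Rightarrow> 'h \<Rightarrow> 'h"
  hun :: "'o \<Rightarrow> 'h"
  src :: "'c \<Rightarrow> 'h"
  tgt :: "'c \<Rightarrow> 'h"
  lft :: "'c \<Rightarrow> 'v"
  rgt :: "'c \<Rightarrow> 'v"
  cv :: "'c \<Rightarrow> 'c \<Rightarrow> 'c"
  cid :: "'h \<Rightarrow> 'c"
  ch :: "'c \<Rightarrow> 'c \<Rightarrow> 'c"
  cun :: "'v \<Rightarrow> 'c"
  asc :: "'h \<Rightarrow> 'h \<Rightarrow> 'h \<Rightarrow> 'c"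
  lu :: "'h \<Rightarrow> 'c"
  ru :: "'h \<Rightarrow> 'c"

definition iso_cell :: "('o,'v,'h,'c,'z) dblcat_scheme \<Rightarrow> 'c \<Rightarrow> bool" where
  "iso_cell D \<phi> \<longleftrightarrow> \<phi> \<in> Cel D \<and>
     (\<exists>\<psi> \<in> Cel D. tgt D \<phi> = src D \<psi> \<and> tgt D \<psi> = src D \<phi> \<and>
        cv D \<psi> \<phi> = cid D (src D \<phi>) \<and> cv D \<phi> \<psi> = cid D (tgt D \<phi>))"

definition cinv :: "('o,'v,'h,'c,'z) dblcat_scheme \<Rightarrow> 'c \<Rightarrow> 'c" where
  "cinv D \<phi> = (THE \<psi>. \<psi> \<in> Cel D \<and> tgt D \<phi> = src D \<psi> \<and> tgt D \<psi> = src D \<phi> \<and>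
        cv D \<psi> \<phi> = cid D (src D \<phi>) \<and> cv D \<phi> \<psi> = cid D (tgt D \<phi>))"

definition globular :: "('o,'v,'h,'c,'z) dblcat_scheme \<Rightarrow> 'c \<Rightarrow> 'h \<Rightarrow> 'h \<Rightarrow> bool" where
  "globular D \<phi> J K \<longleftrightarrow> \<phi> \<in> Cel D \<and> src D \<phi> = J \<and> tgt D \<phi> = K \<and>
     lft D \<phi> = vid D (hdom D J) \<and> rgt D \<phi> = vid D (hcod D J)"

definition vseq :: "('o,'v,'h,'c,'z) dblcat_scheme \<Rightarrow> 'v \<Rightarrow> 'v \<Rightarrow> bool" where
  "vseq D g f \<longleftrightarrow> f \<in> Ver D \<and> g \<in> Ver D \<and> vcod D f = vdom D g"

definition hseq :: "('o,'v,'h,'c,'z) dblcat_scheme \<Rightarrow> 'h \<Rightarrow> 'h \<Rightarrow> bool" where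
  "hseq D J H \<longleftrightarrow> J \<in> Hor D \<and> H \<in> Hor D \<and> hcod D J = hdom D H"

definition cvseq :: "('o,'v,'h,'c,'z) dblcat_scheme \<Rightarrow> 'c \<Rightarrow> 'c \<Rightarrow> bool" where
  "cvseq D \<psi> \<phi> \<longleftrightarrow> \<phi> \<in> Cel D \<and> \<psi> \<in> Cel D \<and> tgt D \<phi> = src D \<psi>"

definition chseq :: "('o,'v,'h,'c,'z) dblcat_scheme \<Rightarrow> 'c \<Rightarrow> 'c \<Rightarrow> bool" where
  "chseq D \<phi> \<psi> \<longleftrightarrow> \<phi> \<in> Cel D \<and> \<psi> \<in> Cel D \<and> hcod D (src D \<phi>) = hdom D (src D \<psi>)
      \<and> rgt D \<phi> = lft D \<psi>"

definition double_category :: "('o,'v,'h,'c,'z) dblcat_scheme \<Rightarrow> bool" where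
  "double_category D \<longleftrightarrow>
   \<comment> \<open>vertical category\<close>
   (\<forall>f \<in> Ver D. vdom D f \<in> Ob D \<and> vcod D f \<in> Ob D) \<and>
   (\<forall>A \<in> Ob D. vid D A \<in> Ver D \<and> vdom D (vid D A) = A \<and> vcod D (vid D A) = A) \<and>
   (\<forall>f g. vseq D g f \<longrightarrow> vcmp D g f \<in> Ver D \<and> vdom D (vcmp D g f) = vdom D f
        \<and> vcod D (vcmp D g f) = vcod D g) \<and>
   (\<forall>f \<in> Ver D. vcmp D f (vid D (vdom D f)) = f \<and> vcmp D (vid D (vcod D f)) f = f) \<and>
   (\<forall>f g h. vseq D g f \<and> vseq D h g \<longrightarrow> vcmp D h (vcmp D g f) = vcmp D (vcmp D h g) f) \<and>
   \<comment> \<open>horizontal morphisms\<close>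
   (\<forall>J \<in> Hor D. hdom D J \<in> Ob D \<and> hcod D J \<in> Ob D) \<and>
   (\<forall>A \<in> Ob D. hun D A \<in> Hor D \<and> hdom D (hun D A) = A \<and> hcod D (hun D A) = A) \<and>
   (\<forall>J H. hseq D J H \<longrightarrow> hcmp D J H \<in> Hor D \<and> hdom D (hcmp D J H) = hdom D J
        \<and> hcod D (hcmp D J H) = hcod D H) \<and>
   \<comment> \<open>cells and their boundaries\<close>
   (\<forall>\<phi> \<in> Cel D. src D \<phi> \<in> Hor D \<and> tgt D \<phi> \<in> Hor D \<and> lft D \<phi> \<in> Ver D \<and> rgt D \<phi> \<in> Ver D
        \<and> vdom D (lft D \<phi>) = hdom D (src D \<phi>) \<and> vcod D (lft D \<phi>) = hdom D (tgt D \<phi>)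
        \<and> vdom D (rgt D \<phi>) = hcod D (src D \<phi>) \<and> vcod D (rgt D \<phi>) = hcod D (tgt D \<phi>)) \<and>
   \<comment> \<open>vertical composition of cells: a category\<close>
   (\<forall>J \<in> Hor D. cid D J \<in> Cel D \<and> src D (cid D J) = J \<and> tgt D (cid D J) = J
        \<and> lft D (cid D J) = vid D (hdom D J) \<and> rgt D (cid D J) = vid D (hcod D J)) \<and>
   (\<forall>\<phi> \<psi>. cvseq D \<psi> \<phi> \<longrightarrow> cv D \<psi> \<phi> \<in> Cel D \<and> src D (cv D \<psi> \<phi>) = src D \<phi>
        \<and> tgt D (cv D \<psi> \<phi>) = tgt D \<psi> \<and> lft D (cv D \<psi> \<phi>) = vcmp D (lft D \<psi>) (lft D \<phi>)
        \<and> rgt D (cv D \<psi> \<phi>) = vcmp D (rgt D \<psi>) (rgt D \<phi>)) \<and>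
   (\<forall>\<phi> \<in> Cel D. cv D \<phi> (cid D (src D \<phi>)) = \<phi> \<and> cv D (cid D (tgt D \<phi>)) \<phi> = \<phi>) \<and>
   (\<forall>\<phi> \<psi> \<chi>. cvseq D \<psi> \<phi> \<and> cvseq D \<chi> \<psi> \<longrightarrow> cv D \<chi> (cv D \<psi> \<phi>) = cv D (cv D \<chi> \<psi>) \<phi>) \<and>
   \<comment> \<open>horizontal unit cells\<close>
   (\<forall>f \<in> Ver D. cun D f \<in> Cel D \<and> src D (cun D f) = hun D (vdom D f)
        \<and> tgt D (cun D f) = hun D (vcod D f) \<and> lft D (cun D f) = f \<and> rgt D (cun D f) = f) \<and>
   (\<forall>A \<in> Ob D. cun D (vid D A) = cid D (hun D A)) \<and>
   (\<forall>f g. vseq D g f \<longrightarrow> cun D (vcmp D g f) = cv D (cun D g) (cun D f)) \<and>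
   \<comment> \<open>horizontal composition of cells: functorial\<close>
   (\<forall>\<phi> \<psi>. chseq D \<phi> \<psi> \<longrightarrow> ch D \<phi> \<psi> \<in> Cel D
        \<and> src D (ch D \<phi> \<psi>) = hcmp D (src D \<phi>) (src D \<psi>)
        \<and> tgt D (ch D \<phi> \<psi>) = hcmp D (tgt D \<phi>) (tgt D \<psi>)
        \<and> lft D (ch D \<phi> \<psi>) = lft D \<phi> \<and> rgt D (ch D \<phi> \<psi>) = rgt D \<psi>) \<and>
   (\<forall>J H. hseq D J H \<longrightarrow> ch D (cid D J) (cid D H) = cid D (hcmp D J H)) \<and>
   (\<forall>\<phi> \<phi>' \<psi> \<psi>'. cvseq D \<psi> \<phi> \<and> cvseq D \<psi>' \<phi>' \<and> chseq D \<phi> \<phi>' \<and> chseq D \<psi> \<psi>' \<longrightarrow>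
        ch D (cv D \<psi> \<phi>) (cv D \<psi>' \<phi>') = cv D (ch D \<psi> \<psi>') (ch D \<phi> \<phi>')) \<and>
   \<comment> \<open>associator and unitors: invertible globular cells\<close>
   (\<forall>J H K. hseq D J H \<and> hseq D H K \<longrightarrow>
        globular D (asc D J H K) (hcmp D (hcmp D J H) K) (hcmp D J (hcmp D H K))
        \<and> iso_cell D (asc D J H K)) \<and>
   (\<forall>J \<in> Hor D. globular D (lu D J) (hcmp D (hun D (hdom D J)) J) J \<and> iso_cell D (lu D J)) \<and>
   (\<forall>J \<in> Hor D. globular D (ru D J) (hcmp D J (hun D (hcod D J))) J \<and> iso_cell D (ru D J)) \<and>
   \<comment> \<open>naturality of associator and unitors\<close>
   (\<forall>\<phi> \<psi> \<chi>. chseq D \<phi> \<psi> \<and> chseq D \<psi> \<chi> \<longrightarrow>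
        cv D (asc D (tgt D \<phi>) (tgt D \<psi>) (tgt D \<chi>)) (ch D (ch D \<phi> \<psi>) \<chi>)
        = cv D (ch D \<phi> (ch D \<psi> \<chi>)) (asc D (src D \<phi>) (src D \<psi>) (src D \<chi>))) \<and>
   (\<forall>\<phi> \<in> Cel D. cv D \<phi> (lu D (src D \<phi>)) = cv D (lu D (tgt D \<phi>)) (ch D (cun D (lft D \<phi>)) \<phi>)) \<and>
   (\<forall>\<phi> \<in> Cel D. cv D \<phi> (ru D (src D \<phi>)) = cv D (ru D (tgt D \<phi>)) (ch D \<phi> (cun D (rgt D \<phi>)))) \<and>
   \<comment> \<open>pentagon and triangle\<close>
   (\<forall>J H K L. hseq D J H \<and> hseq D H K \<and> hseq D K L \<longrightarrow>
        cv D (asc D J H (hcmp D K L)) (asc D (hcmp D J H) K L)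
        = cv D (ch D (cid D J) (asc D H K L))
            (cv D (asc D J (hcmp D H K) L) (ch D (asc D J H K) (cid D L)))) \<and>
   (\<forall>J H. hseq D J H \<longrightarrow>
        cv D (ch D (cid D J) (lu D H)) (asc D J (hun D (hcod D J)) H) = ch D (ru D J) (cid D H))"

definition cartesian :: "('o,'v,'h,'c,'z) dblcat_scheme \<Rightarrow> 'c \<Rightarrow> bool" where
  "cartesian D \<phi> \<longleftrightarrow> \<phi> \<in> Cel D \<and>
    (\<forall>\<chi> h k. \<chi> \<in> Cel D \<and> vseq D (lft D \<phi>) h \<and> vseq D (rgt D \<phi>) k \<and>
        tgt D \<chi> = tgt D \<phi> \<and> lft D \<chi> = vcmp D (lft D \<phi>) h \<and> rgt D \<chi> = vcmp D (rgt D \<phi>) k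
      \<longrightarrow> (\<exists>!\<theta>. \<theta> \<in> Cel D \<and> src D \<theta> = src D \<chi> \<and> tgt D \<theta> = src D \<phi> \<and>
             lft D \<theta> = h \<and> rgt D \<theta> = k \<and> cv D \<phi> \<theta> = \<chi>))"

text \<open>p is a cartesian cell f_* => 1_C with sides f, id_C, exhibiting its horizontal source
src p as the companion f_* of f : A -> C.\<close>
definition companion_cell :: "('o,'v,'h,'c,'z) dblcat_scheme \<Rightarrow> 'v \<Rightarrow> 'c \<Rightarrow> bool" where
  "companion_cell D f p \<longleftrightarrow> f \<in> Ver D \<and> cartesian D p \<and>
     tgt D p = hun D (vcod D f) \<and> lft D p = f \<and> rgt D p = vid D (vcod D f)"

text \<open>p is a cartesian cell f^* => 1_C with sides id_C, f (the conjoint f^* : C -|-> A).\<close>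
definition conjoint_cell :: "('o,'v,'h,'c,'z) dblcat_scheme \<Rightarrow> 'v \<Rightarrow> 'c \<Rightarrow> bool" where
  "conjoint_cell D f p \<longleftrightarrow> f \<in> Ver D \<and> cartesian D p \<and>
     tgt D p = hun D (vcod D f) \<and> lft D p = vid D (vcod D f) \<and> rgt D p = f"

text \<open>The opcartesian cell 1_A => f_* (sides id_A, f) corresponding to the cartesian cell p:
the unique factorisation of the unit cell 1_f through p.\<close>
definition companion_unit :: "('o,'v,'h,'c,'z) dblcat_scheme \<Rightarrow> 'v \<Rightarrow> 'c \<Rightarrow> 'c" where
  "companion_unit D f p = (THE q. q \<in> Cel D \<and> src D q = hun D (vdom D f) \<and> tgt D q = src D p
      \<and> lft D q = vid D (vdom D f) \<and> rgt D q = f \<and> cv D p q = cun D f)"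

definition equipment :: "('o,'v,'h,'c,'z) dblcat_scheme \<Rightarrow> bool" where
  "equipment D \<longleftrightarrow> double_category D \<and>
     (\<forall>f \<in> Ver D. (\<exists>p. companion_cell D f p) \<and> (\<exists>p. conjoint_cell D f p))"

text \<open>A lax double (endo)functor: action on objects, vertical and horizontal morphisms
and cells, and compositors fcmp J H : FJ . FH => F(J . H).\<close>
record ('o,'v,'h,'c) ldf =
  fo :: "'o \<Rightarrow> 'o"
  fv :: "'v \<Rightarrow> 'v"
  fh :: "'h \<Rightarrow> 'h"
  fc :: "'c \<Rightarrow> 'c"
  fcmp :: "'h \<Rightarrow> 'h \<Rightarrow> 'c"

definition normal_lax_double_functor ::
  "('o,'v,'h,'c,'z) dblcat_scheme \<Rightarrow> ('o,'v,'h,'c,'y) ldf_scheme \<Rightarrow> bool" where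
  "normal_lax_double_functor D F \<longleftrightarrow>
   (\<forall>A \<in> Ob D. fo F A \<in> Ob D) \<and>
   (\<forall>f \<in> Ver D. fv F f \<in> Ver D \<and> vdom D (fv F f) = fo F (vdom D f) \<and> vcod D (fv F f) = fo F (vcod D f)) \<and>
   (\<forall>J \<in> Hor D. fh F J \<in> Hor D \<and> hdom D (fh F J) = fo F (hdom D J) \<and> hcod D (fh F J) = fo F (hcod D J)) \<and>
   (\<forall>\<phi> \<in> Cel D. fc F \<phi> \<in> Cel D \<and> src D (fc F \<phi>) = fh F (src D \<phi>) \<and> tgt D (fc F \<phi>) = fh F (tgt D \<phi>)
        \<and> lft D (fc F \<phi>) = fv F (lft D \<phi>) \<and> rgt D (fc F \<phi>) = fv F (rgt D \<phi>)) \<and>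
   \<comment> \<open>strict preservation of vertical structure\<close>
   (\<forall>A \<in> Ob D. fv F (vid D A) = vid D (fo F A)) \<and>
   (\<forall>f g. vseq D g f \<longrightarrow> fv F (vcmp D g f) = vcmp D (fv F g) (fv F f)) \<and>
   (\<forall>J \<in> Hor D. fc F (cid D J) = cid D (fh F J)) \<and>
   (\<forall>\<phi> \<psi>. cvseq D \<psi> \<phi> \<longrightarrow> fc F (cv D \<psi> \<phi>) = cv D (fc F \<psi>) (fc F \<phi>)) \<and>
   \<comment> \<open>strict preservation of horizontal units (normality)\<close>
   (\<forall>A \<in> Ob D. fh F (hun D A) = hun D (fo F A)) \<and>
   (\<forall>f \<in> Ver D. fc F (cun D f) = cun D (fv F f)) \<and>
   \<comment> \<open>compositors\<close>
   (\<forall>J H. hseq D J H \<longrightarrow> globular D (fcmp F J H) (hcmp D (fh F J) (fh F H)) (fh F (hcmp D J H))) \<and>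
   (\<forall>\<phi> \<psi>. chseq D \<phi> \<psi> \<longrightarrow>
        cv D (fc F (ch D \<phi> \<psi>)) (fcmp F (src D \<phi>) (src D \<psi>))
        = cv D (fcmp F (tgt D \<phi>) (tgt D \<psi>)) (ch D (fc F \<phi>) (fc F \<psi>))) \<and>
   (\<forall>J H K. hseq D J H \<and> hseq D H K \<longrightarrow>
        cv D (fc F (asc D J H K)) (cv D (fcmp F (hcmp D J H) K) (ch D (fcmp F J H) (cid D (fh F K))))
        = cv D (fcmp F J (hcmp D H K))
            (cv D (ch D (cid D (fh F J)) (fcmp F H K)) (asc D (fh F J) (fh F H) (fh F K)))) \<and>
   (\<forall>J \<in> Hor D. cv D (fc F (lu D J)) (fcmp F (hun D (hdom D J)) J) = lu D (fh F J)) \<and>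
   (\<forall>J \<in> Hor D. cv D (fc F (ru D J)) (fcmp F J (hun D (hcod D J))) = ru D (fh F J))"

definition id_ldf :: "('o,'v,'h,'c,'z) dblcat_scheme \<Rightarrow> ('o,'v,'h,'c) ldf" where
  "id_ldf D = \<lparr> fo = (\<lambda>A. A), fv = (\<lambda>f. f), fh = (\<lambda>J. J), fc = (\<lambda>\<phi>. \<phi>),
               fcmp = (\<lambda>J H. cid D (hcmp D J H)) \<rparr>"

definition comp_ldf :: "('o,'v,'h,'c,'z) dblcat_scheme \<Rightarrow> ('o,'v,'h,'c,'y) ldf_scheme
    \<Rightarrow> ('o,'v,'h,'c,'x) ldf_scheme \<Rightarrow> ('o,'v,'h,'c) ldf" where
  "comp_ldf D G F = \<lparr> fo = fo G \<circ> fo F, fv = fv G \<circ> fv F, fh = fh G \<circ> fh F, fc = fc G \<circ> fc F,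
       fcmp = (\<lambda>J H. cv D (fc G (fcmp F J H)) (fcmp G (fh F J) (fh F H))) \<rparr>"

record ('v,'c,'o,'h) dtr =
  to :: "'o \<Rightarrow> 'v"
  th :: "'h \<Rightarrow> 'c"

definition double_transformation ::
  "('o,'v,'h,'c,'z) dblcat_scheme \<Rightarrow> ('o,'v,'h,'c,'y) ldf_scheme \<Rightarrow> ('o,'v,'h,'c,'x) ldf_scheme
     \<Rightarrow> ('v,'c,'o,'h,'w) dtr_scheme \<Rightarrow> bool" where
  "double_transformation D F G \<alpha> \<longleftrightarrow>
   (\<forall>A \<in> Ob D. to \<alpha> A \<in> Ver D \<and> vdom D (to \<alpha> A) = fo F A \<and> vcod D (to \<alpha> A) = fo G A) \<and>
   (\<forall>J \<in> Hor D. th \<alpha> J \<in> Cel D \<and> src D (th \<alpha> J) = fh F J \<and> tgt D (th \<alpha> J) = fh G J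
        \<and> lft D (th \<alpha> J) = to \<alpha> (hdom D J) \<and> rgt D (th \<alpha> J) = to \<alpha> (hcod D J)) \<and>
   (\<forall>f \<in> Ver D. vcmp D (to \<alpha> (vcod D f)) (fv F f) = vcmp D (fv G f) (to \<alpha> (vdom D f))) \<and>
   (\<forall>\<phi> \<in> Cel D. cv D (th \<alpha> (tgt D \<phi>)) (fc F \<phi>) = cv D (fc G \<phi>) (th \<alpha> (src D \<phi>))) \<and>
   (\<forall>J H. hseq D J H \<longrightarrow>
        cv D (th \<alpha> (hcmp D J H)) (fcmp F J H) = cv D (fcmp G J H) (ch D (th \<alpha> J) (th \<alpha> H))) \<and>
   (\<forall>A \<in> Ob D. th \<alpha> (hun D A) = cun D (to \<alpha> A))"

definition normal_lax_double_monad ::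
  "('o,'v,'h,'c,'z) dblcat_scheme \<Rightarrow> ('o,'v,'h,'c,'y) ldf_scheme
     \<Rightarrow> ('v,'c,'o,'h,'x) dtr_scheme \<Rightarrow> ('v,'c,'o,'h,'w) dtr_scheme \<Rightarrow> bool" where
  "normal_lax_double_monad D T \<mu> \<iota> \<longleftrightarrow>
   double_category D \<and> normal_lax_double_functor D T \<and>
   double_transformation D (comp_ldf D T T) T \<mu> \<and>
   double_transformation D (id_ldf D) T \<iota> \<and>
   (\<forall>A \<in> Ob D. vcmp D (to \<mu> A) (fv T (to \<mu> A)) = vcmp D (to \<mu> A) (to \<mu> (fo T A))
        \<and> vcmp D (to \<mu> A) (to \<iota> (fo T A)) = vid D (fo T A)
        \<and> vcmp D (to \<mu> A) (fv T (to \<iota> A)) = vid D (fo T A)) \<and>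
   (\<forall>J \<in> Hor D. cv D (th \<mu> J) (fc T (th \<mu> J)) = cv D (th \<mu> J) (th \<mu> (fh T J))
        \<and> cv D (th \<mu> J) (th \<iota> (fh T J)) = cid D (fh T J)
        \<and> cv D (th \<mu> J) (fc T (th \<iota> J)) = cid D (fh T J))"

text \<open>Given cartesian companion cells pA : iota_A* => 1_{TA} and pB : iota_B* => 1_{TB},
iota_J* : J . iota_B* => iota_A* . TJ is
  rho o ((opc_A . iota_J) . pB) o (lambda_J^{-1} . id).\<close>
definition iota_star ::
  "('o,'v,'h,'c,'z) dblcat_scheme \<Rightarrow> ('o,'v,'h,'c,'y) ldf_scheme \<Rightarrow> ('v,'c,'o,'h,'x) dtr_scheme
     \<Rightarrow> 'h \<Rightarrow> 'c \<Rightarrow> 'c \<Rightarrow> 'c" where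
  "iota_star D T \<iota> J pA pB =
     cv D (ru D (hcmp D (src D pA) (fh T J)))
       (cv D (ch D (ch D (companion_unit D (to \<iota> (hdom D J)) pA) (th \<iota> J)) pB)
             (ch D (cinv D (lu D J)) (cid D (src D pB))))"

definition right_BC ::
  "('o,'v,'h,'c,'z) dblcat_scheme \<Rightarrow> ('o,'v,'h,'c,'y) ldf_scheme \<Rightarrow> ('v,'c,'o,'h,'x) dtr_scheme
     \<Rightarrow> 'h \<Rightarrow> bool" where
  "right_BC D T \<iota> J \<longleftrightarrow>
     (\<forall>pA pB. companion_cell D (to \<iota> (hdom D J)) pA \<longrightarrow> companion_cell D (to \<iota> (hcod D J)) pB
        \<longrightarrow> iso_cell D (iota_star D T \<iota> J pA pB))"

end

theory Submission
  imports Defs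
begin

text \<open>
  Put \<open>J = f\<^sub>*\<close> and \<open>g = \<iota>\<^sub>C \<circ> f = Tf \<circ> \<iota>\<^sub>A\<close>.  A composite of companions is a companion of the
  composite, and a normal lax functor preserves companions, \<open>T(f\<^sub>*) = (Tf)\<^sub>*\<close>.  Hence both
  \<open>J \<odot> \<iota>\<^sub>C\<^sub>*\<close> and \<open>\<iota>\<^sub>A\<^sub>* \<odot> TJ\<close> are companions of \<open>g\<close>, and \<open>\<iota>\<^sub>J\<^sub>*\<close> is a comparison between them:
  it commutes with their binding cells into \<open>1\<^sub>T\<^sub>C\<close>.  Binding cells of companions cancel on
  cells with identity sides, and every cell into a unit with the right sides factors through
  them, so such a comparison is invertible.
\<close>

section \<open>Double categories\<close>

locale double_cat =
  fixes D :: "('o,'v,'h,'c) dblcat"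
  assumes double_category: "double_category D"
begin

lemma double_category_conjuncts:
  shows vertical_objects: "\<forall>f \<in> Ver D. vdom D f \<in> Ob D \<and> vcod D f \<in> Ob D"
    and vid_axioms: "\<forall>A \<in> Ob D. vid D A \<in> Ver D \<and> vdom D (vid D A) = A \<and> vcod D (vid D A) = A"
    and vcmp_axioms: "\<forall>f g. vseq D g f \<longrightarrow> vcmp D g f \<in> Ver D \<and> vdom D (vcmp D g f) = vdom D f
        \<and> vcod D (vcmp D g f) = vcod D g"
    and vcmp_vid_axioms: "\<forall>f \<in> Ver D. vcmp D f (vid D (vdom D f)) = f \<and> vcmp D (vid D (vcod D f)) f = f"
    and horizontal_objects: "\<forall>J \<in> Hor D. hdom D J \<in> Ob D \<and> hcod D J \<in> Ob D"
    and hun_axioms: "\<forall>A \<in> Ob D. hun D A \<in> Hor D \<and> hdom D (hun D A) = A \<and> hcod D (hun D A) = A"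
    and hcmp_axioms: "\<forall>J H. hseq D J H \<longrightarrow> hcmp D J H \<in> Hor D \<and> hdom D (hcmp D J H) = hdom D J
        \<and> hcod D (hcmp D J H) = hcod D H"
    and cell_axioms: "\<forall>\<phi> \<in> Cel D. src D \<phi> \<in> Hor D \<and> tgt D \<phi> \<in> Hor D \<and> lft D \<phi> \<in> Ver D \<and> rgt D \<phi> \<in> Ver D
        \<and> vdom D (lft D \<phi>) = hdom D (src D \<phi>) \<and> vcod D (lft D \<phi>) = hdom D (tgt D \<phi>)
        \<and> vdom D (rgt D \<phi>) = hcod D (src D \<phi>) \<and> vcod D (rgt D \<phi>) = hcod D (tgt D \<phi>)"
    and cid_axioms: "\<forall>J \<in> Hor D. cid D J \<in> Cel D \<and> src D (cid D J) = J \<and> tgt D (cid D J) = J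
        \<and> lft D (cid D J) = vid D (hdom D J) \<and> rgt D (cid D J) = vid D (hcod D J)"
    and cv_axioms: "\<forall>\<phi> \<psi>. cvseq D \<psi> \<phi> \<longrightarrow> cv D \<psi> \<phi> \<in> Cel D \<and> src D (cv D \<psi> \<phi>) = src D \<phi>
        \<and> tgt D (cv D \<psi> \<phi>) = tgt D \<psi> \<and> lft D (cv D \<psi> \<phi>) = vcmp D (lft D \<psi>) (lft D \<phi>)
        \<and> rgt D (cv D \<psi> \<phi>) = vcmp D (rgt D \<psi>) (rgt D \<phi>)"
    and cv_cid_axioms: "\<forall>\<phi> \<in> Cel D. cv D \<phi> (cid D (src D \<phi>)) = \<phi> \<and> cv D (cid D (tgt D \<phi>)) \<phi> = \<phi>"
    and cv_assoc_axiom: "\<forall>\<phi> \<psi> \<chi>. cvseq D \<psi> \<phi> \<and> cvseq D \<chi> \<psi> \<longrightarrow> cv D \<chi> (cv D \<psi> \<phi>) = cv D (cv D \<chi> \<psi>) \<phi>"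
    and cun_axioms: "\<forall>f \<in> Ver D. cun D f \<in> Cel D \<and> src D (cun D f) = hun D (vdom D f)
        \<and> tgt D (cun D f) = hun D (vcod D f) \<and> lft D (cun D f) = f \<and> rgt D (cun D f) = f"
    and cun_vid_axiom: "\<forall>A \<in> Ob D. cun D (vid D A) = cid D (hun D A)"
    and cun_vcmp_axiom: "\<forall>f g. vseq D g f \<longrightarrow> cun D (vcmp D g f) = cv D (cun D g) (cun D f)"
    and ch_axioms: "\<forall>\<phi> \<psi>. chseq D \<phi> \<psi> \<longrightarrow> ch D \<phi> \<psi> \<in> Cel D
        \<and> src D (ch D \<phi> \<psi>) = hcmp D (src D \<phi>) (src D \<psi>)
        \<and> tgt D (ch D \<phi> \<psi>) = hcmp D (tgt D \<phi>) (tgt D \<psi>)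
        \<and> lft D (ch D \<phi> \<psi>) = lft D \<phi> \<and> rgt D (ch D \<phi> \<psi>) = rgt D \<psi>"
    and ch_cid_axiom: "\<forall>J H. hseq D J H \<longrightarrow> ch D (cid D J) (cid D H) = cid D (hcmp D J H)"
    and interchange_axiom: "\<forall>\<phi> \<phi>' \<psi> \<psi>'. cvseq D \<psi> \<phi> \<and> cvseq D \<psi>' \<phi>' \<and> chseq D \<phi> \<phi>' \<and> chseq D \<psi> \<psi>' \<longrightarrow>
        ch D (cv D \<psi> \<phi>) (cv D \<psi>' \<phi>') = cv D (ch D \<psi> \<psi>') (ch D \<phi> \<phi>')"
    and asc_axioms: "\<forall>J H K. hseq D J H \<and> hseq D H K \<longrightarrow>
        globular D (asc D J H K) (hcmp D (hcmp D J H) K) (hcmp D J (hcmp D H K))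
        \<and> iso_cell D (asc D J H K)"
    and lu_axioms: "\<forall>J \<in> Hor D. globular D (lu D J) (hcmp D (hun D (hdom D J)) J) J \<and> iso_cell D (lu D J)"
    and ru_axioms: "\<forall>J \<in> Hor D. globular D (ru D J) (hcmp D J (hun D (hcod D J))) J \<and> iso_cell D (ru D J)"
    and asc_naturality_axiom: "\<forall>\<phi> \<psi> \<chi>. chseq D \<phi> \<psi> \<and> chseq D \<psi> \<chi> \<longrightarrow>
        cv D (asc D (tgt D \<phi>) (tgt D \<psi>) (tgt D \<chi>)) (ch D (ch D \<phi> \<psi>) \<chi>)
        = cv D (ch D \<phi> (ch D \<psi> \<chi>)) (asc D (src D \<phi>) (src D \<psi>) (src D \<chi>))"
    and lu_naturality_axiom:
      "\<forall>\<phi> \<in> Cel D. cv D \<phi> (lu D (src D \<phi>)) = cv D (lu D (tgt D \<phi>)) (ch D (cun D (lft D \<phi>)) \<phi>)"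
    and ru_naturality_axiom:
      "\<forall>\<phi> \<in> Cel D. cv D \<phi> (ru D (src D \<phi>)) = cv D (ru D (tgt D \<phi>)) (ch D \<phi> (cun D (rgt D \<phi>)))"
    and pentagon_axiom: "\<forall>J H K L. hseq D J H \<and> hseq D H K \<and> hseq D K L \<longrightarrow>
        cv D (asc D J H (hcmp D K L)) (asc D (hcmp D J H) K L)
        = cv D (ch D (cid D J) (asc D H K L))
            (cv D (asc D J (hcmp D H K) L) (ch D (asc D J H K) (cid D L)))"
    and triangle_axiom: "\<forall>J H. hseq D J H \<longrightarrow>
        cv D (ch D (cid D J) (lu D H)) (asc D J (hun D (hcod D J)) H) = ch D (ru D J) (cid D H)"
  using double_category unfolding double_category_def by - (elim conjE; assumption)+


lemma vertical_category[simp]: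
  "f \<in> Ver D \<Longrightarrow> vdom D f \<in> Ob D"
  "f \<in> Ver D \<Longrightarrow> vcod D f \<in> Ob D"
  "A \<in> Ob D \<Longrightarrow> vid D A \<in> Ver D"
  "A \<in> Ob D \<Longrightarrow> vdom D (vid D A) = A"
  "A \<in> Ob D \<Longrightarrow> vcod D (vid D A) = A"
  "f \<in> Ver D \<Longrightarrow> g \<in> Ver D \<Longrightarrow> vcod D f = vdom D g \<Longrightarrow> vcmp D g f \<in> Ver D"
  "f \<in> Ver D \<Longrightarrow> g \<in> Ver D \<Longrightarrow> vcod D f = vdom D g \<Longrightarrow> vdom D (vcmp D g f) = vdom D f"
  "f \<in> Ver D \<Longrightarrow> g \<in> Ver D \<Longrightarrow> vcod D f = vdom D g \<Longrightarrow> vcod D (vcmp D g f) = vcod D g"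
  "f \<in> Ver D \<Longrightarrow> vdom D f = A \<Longrightarrow> vcmp D f (vid D A) = f"
  "f \<in> Ver D \<Longrightarrow> vcod D f = A \<Longrightarrow> vcmp D (vid D A) f = f"
  using vertical_objects vid_axioms vcmp_axioms vcmp_vid_axioms unfolding vseq_def by blast+

lemma horizontal_morphisms[simp]:
  "J \<in> Hor D \<Longrightarrow> hdom D J \<in> Ob D"
  "J \<in> Hor D \<Longrightarrow> hcod D J \<in> Ob D"
  "A \<in> Ob D \<Longrightarrow> hun D A \<in> Hor D"
  "A \<in> Ob D \<Longrightarrow> hdom D (hun D A) = A"
  "A \<in> Ob D \<Longrightarrow> hcod D (hun D A) = A"
  "J \<in> Hor D \<Longrightarrow> H \<in> Hor D \<Longrightarrow> hcod D J = hdom D H \<Longrightarrow> hcmp D J H \<in> Hor D"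
  "J \<in> Hor D \<Longrightarrow> H \<in> Hor D \<Longrightarrow> hcod D J = hdom D H \<Longrightarrow> hdom D (hcmp D J H) = hdom D J"
  "J \<in> Hor D \<Longrightarrow> H \<in> Hor D \<Longrightarrow> hcod D J = hdom D H \<Longrightarrow> hcod D (hcmp D J H) = hcod D H"
  using horizontal_objects hun_axioms hcmp_axioms unfolding hseq_def by blast+

lemma cell_boundary[simp]:
  "\<phi> \<in> Cel D \<Longrightarrow> src D \<phi> \<in> Hor D"
  "\<phi> \<in> Cel D \<Longrightarrow> tgt D \<phi> \<in> Hor D"
  "\<phi> \<in> Cel D \<Longrightarrow> lft D \<phi> \<in> Ver D"
  "\<phi> \<in> Cel D \<Longrightarrow> rgt D \<phi> \<in> Ver D"
  using cell_axioms by blast+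

lemma cell_corners:
  "\<phi> \<in> Cel D \<Longrightarrow> vdom D (lft D \<phi>) = hdom D (src D \<phi>)"
  "\<phi> \<in> Cel D \<Longrightarrow> vcod D (lft D \<phi>) = hdom D (tgt D \<phi>)"
  "\<phi> \<in> Cel D \<Longrightarrow> vdom D (rgt D \<phi>) = hcod D (src D \<phi>)"
  "\<phi> \<in> Cel D \<Longrightarrow> vcod D (rgt D \<phi>) = hcod D (tgt D \<phi>)"
  using cell_axioms by blast+

lemma cid_boundary[simp]:
  "J \<in> Hor D \<Longrightarrow> cid D J \<in> Cel D"
  "J \<in> Hor D \<Longrightarrow> src D (cid D J) = J"
  "J \<in> Hor D \<Longrightarrow> tgt D (cid D J) = J"
  "J \<in> Hor D \<Longrightarrow> lft D (cid D J) = vid D (hdom D J)"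
  "J \<in> Hor D \<Longrightarrow> rgt D (cid D J) = vid D (hcod D J)"
  using cid_axioms by blast+

lemma cv_boundary[simp]:
  assumes "\<phi> \<in> Cel D" "\<psi> \<in> Cel D" "tgt D \<phi> = src D \<psi>"
  shows "cv D \<psi> \<phi> \<in> Cel D" "src D (cv D \<psi> \<phi>) = src D \<phi>" "tgt D (cv D \<psi> \<phi>) = tgt D \<psi>"
    "lft D (cv D \<psi> \<phi>) = vcmp D (lft D \<psi>) (lft D \<phi>)"
    "rgt D (cv D \<psi> \<phi>) = vcmp D (rgt D \<psi>) (rgt D \<phi>)"
  using cv_axioms assms unfolding cvseq_def by blast+

lemma cv_cid[simp]:
  "\<phi> \<in> Cel D \<Longrightarrow> src D \<phi> = J \<Longrightarrow> cv D \<phi> (cid D J) = \<phi>"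
  "\<phi> \<in> Cel D \<Longrightarrow> tgt D \<phi> = J \<Longrightarrow> cv D (cid D J) \<phi> = \<phi>"
  using cv_cid_axioms by blast+

lemma cv_assoc:
  assumes "\<phi> \<in> Cel D" "\<psi> \<in> Cel D" "\<chi> \<in> Cel D" "tgt D \<phi> = src D \<psi>" "tgt D \<psi> = src D \<chi>"
  shows "cv D (cv D \<chi> \<psi>) \<phi> = cv D \<chi> (cv D \<psi> \<phi>)"
  using cv_assoc_axiom assms unfolding cvseq_def by simp

lemma cun_boundary[simp]:
  "f \<in> Ver D \<Longrightarrow> cun D f \<in> Cel D"
  "f \<in> Ver D \<Longrightarrow> src D (cun D f) = hun D (vdom D f)"
  "f \<in> Ver D \<Longrightarrow> tgt D (cun D f) = hun D (vcod D f)"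
  "f \<in> Ver D \<Longrightarrow> lft D (cun D f) = f"
  "f \<in> Ver D \<Longrightarrow> rgt D (cun D f) = f"
  "A \<in> Ob D \<Longrightarrow> cun D (vid D A) = cid D (hun D A)"
  using cun_axioms cun_vid_axiom by blast+

lemma cun_vcmp:
  "f \<in> Ver D \<Longrightarrow> g \<in> Ver D \<Longrightarrow> vcod D f = vdom D g \<Longrightarrow> cun D (vcmp D g f) = cv D (cun D g) (cun D f)"
  using cun_vcmp_axiom unfolding vseq_def by blast

lemma ch_boundary[simp]:
  assumes "\<phi> \<in> Cel D" "\<psi> \<in> Cel D" "hcod D (src D \<phi>) = hdom D (src D \<psi>)" "rgt D \<phi> = lft D \<psi>"
  shows "ch D \<phi> \<psi> \<in> Cel D" "src D (ch D \<phi> \<psi>) = hcmp D (src D \<phi>) (src D \<psi>)"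
    "tgt D (ch D \<phi> \<psi>) = hcmp D (tgt D \<phi>) (tgt D \<psi>)"
    "lft D (ch D \<phi> \<psi>) = lft D \<phi>" "rgt D (ch D \<phi> \<psi>) = rgt D \<psi>"
  using ch_axioms assms unfolding chseq_def by blast+

lemma ch_cid[simp]:
  "J \<in> Hor D \<Longrightarrow> H \<in> Hor D \<Longrightarrow> hcod D J = hdom D H \<Longrightarrow> ch D (cid D J) (cid D H) = cid D (hcmp D J H)"
  using ch_cid_axiom unfolding hseq_def by blast

lemma interchange:
  assumes "\<phi> \<in> Cel D" "\<psi> \<in> Cel D" "tgt D \<phi> = src D \<psi>"
    and "\<phi>' \<in> Cel D" "\<psi>' \<in> Cel D" "tgt D \<phi>' = src D \<psi>'"
    and "hcod D (src D \<phi>) = hdom D (src D \<phi>')" "rgt D \<phi> = lft D \<phi>'"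
    and "hcod D (src D \<psi>) = hdom D (src D \<psi>')" "rgt D \<psi> = lft D \<psi>'"
  shows "ch D (cv D \<psi> \<phi>) (cv D \<psi>' \<phi>') = cv D (ch D \<psi> \<psi>') (ch D \<phi> \<phi>')"
  using interchange_axiom assms unfolding cvseq_def chseq_def by simp

lemma unitor_boundary[simp]:
  assumes "J \<in> Hor D"
  shows "lu D J \<in> Cel D" "src D (lu D J) = hcmp D (hun D (hdom D J)) J" "tgt D (lu D J) = J"
    "lft D (lu D J) = vid D (hdom D J)" "rgt D (lu D J) = vid D (hcod D J)" "iso_cell D (lu D J)"
    "ru D J \<in> Cel D" "src D (ru D J) = hcmp D J (hun D (hcod D J))" "tgt D (ru D J) = J"
    "lft D (ru D J) = vid D (hdom D J)" "rgt D (ru D J) = vid D (hcod D J)" "iso_cell D (ru D J)"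
  using lu_axioms ru_axioms assms unfolding globular_def by simp_all

lemma asc_boundary[simp]:
  assumes "J \<in> Hor D" "H \<in> Hor D" "K \<in> Hor D" "hcod D J = hdom D H" "hcod D H = hdom D K"
  shows "asc D J H K \<in> Cel D" "src D (asc D J H K) = hcmp D (hcmp D J H) K"
    "tgt D (asc D J H K) = hcmp D J (hcmp D H K)"
    "lft D (asc D J H K) = vid D (hdom D J)" "rgt D (asc D J H K) = vid D (hcod D K)"
    "iso_cell D (asc D J H K)"
  using asc_axioms assms unfolding globular_def hseq_def by (simp_all add: assms)

lemma asc_naturality:
  assumes "\<phi> \<in> Cel D" "\<psi> \<in> Cel D" "\<chi> \<in> Cel D"
    and "hcod D (src D \<phi>) = hdom D (src D \<psi>)" "rgt D \<phi> = lft D \<psi>"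
    and "hcod D (src D \<psi>) = hdom D (src D \<chi>)" "rgt D \<psi> = lft D \<chi>"
  shows "cv D (asc D (tgt D \<phi>) (tgt D \<psi>) (tgt D \<chi>)) (ch D (ch D \<phi> \<psi>) \<chi>)
    = cv D (ch D \<phi> (ch D \<psi> \<chi>)) (asc D (src D \<phi>) (src D \<psi>) (src D \<chi>))"
  using asc_naturality_axiom assms unfolding chseq_def by simp

lemma lu_naturality:
  "\<phi> \<in> Cel D \<Longrightarrow> cv D \<phi> (lu D (src D \<phi>)) = cv D (lu D (tgt D \<phi>)) (ch D (cun D (lft D \<phi>)) \<phi>)"
  using lu_naturality_axiom by blast

lemma ru_naturality:
  "\<phi> \<in> Cel D \<Longrightarrow> cv D \<phi> (ru D (src D \<phi>)) = cv D (ru D (tgt D \<phi>)) (ch D \<phi> (cun D (rgt D \<phi>)))"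
  using ru_naturality_axiom by blast

lemma pentagon:
  assumes "J \<in> Hor D" "H \<in> Hor D" "K \<in> Hor D" "L \<in> Hor D"
    and "hcod D J = hdom D H" "hcod D H = hdom D K" "hcod D K = hdom D L"
  shows "cv D (asc D J H (hcmp D K L)) (asc D (hcmp D J H) K L)
    = cv D (ch D (cid D J) (asc D H K L)) (cv D (asc D J (hcmp D H K) L) (ch D (asc D J H K) (cid D L)))"
  using pentagon_axiom assms unfolding hseq_def by simp

lemma triangle:
  "J \<in> Hor D \<Longrightarrow> H \<in> Hor D \<Longrightarrow> hcod D J = hdom D H \<Longrightarrow>
    cv D (ch D (cid D J) (lu D H)) (asc D J (hun D (hcod D J)) H) = ch D (ru D J) (cid D H)"
  using triangle_axiom unfolding hseq_def by blast

lemma cinv_boundary[simp]: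
  assumes "iso_cell D \<phi>"
  shows "cinv D \<phi> \<in> Cel D" "src D (cinv D \<phi>) = tgt D \<phi>" "tgt D (cinv D \<phi>) = src D \<phi>"
    "cv D (cinv D \<phi>) \<phi> = cid D (src D \<phi>)" "cv D \<phi> (cinv D \<phi>) = cid D (tgt D \<phi>)"
proof -
  obtain \<psi> where \<psi>: "\<psi> \<in> Cel D" "src D \<psi> = tgt D \<phi>" "tgt D \<psi> = src D \<phi>"
      "cv D \<psi> \<phi> = cid D (src D \<phi>)" "cv D \<phi> \<psi> = cid D (tgt D \<phi>)" and \<phi>: "\<phi> \<in> Cel D"
    using assms unfolding iso_cell_def by auto
  have unique: "\<psi>' = \<psi>"
    if "\<psi>' \<in> Cel D" "tgt D \<phi> = src D \<psi>'" "cv D \<psi>' \<phi> = cid D (src D \<phi>)" for \<psi>'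
  proof -
    have "\<psi>' = cv D \<psi>' (cid D (tgt D \<phi>))" using that(1,2) by simp
    also have "\<dots> = cv D \<psi>' (cv D \<phi> \<psi>)" using \<psi>(5) by simp
    also have "\<dots> = cv D (cv D \<psi>' \<phi>) \<psi>" by (rule cv_assoc[symmetric]) (use \<psi> \<phi> that in simp_all)
    also have "\<dots> = \<psi>" using that(3) \<psi>(1,3) by simp
    finally show ?thesis .
  qed
  have "cinv D \<phi> = \<psi>"
    unfolding cinv_def
  proof (rule the_equality)
    show "\<psi> \<in> Cel D \<and> tgt D \<phi> = src D \<psi> \<and> tgt D \<psi> = src D \<phi> \<and>
        cv D \<psi> \<phi> = cid D (src D \<phi>) \<and> cv D \<phi> \<psi> = cid D (tgt D \<phi>)"
      using \<psi> by simp
  qed (elim conjE, rule unique, assumption+)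
  with \<psi> show "cinv D \<phi> \<in> Cel D" "src D (cinv D \<phi>) = tgt D \<phi>" "tgt D (cinv D \<phi>) = src D \<phi>"
    "cv D (cinv D \<phi>) \<phi> = cid D (src D \<phi>)" "cv D \<phi> (cinv D \<phi>) = cid D (tgt D \<phi>)"
    by simp_all
qed

lemma iso_cell_in_Cel: "iso_cell D \<phi> \<Longrightarrow> \<phi> \<in> Cel D"
  unfolding iso_cell_def by blast

lemma iso_cell_cancel_left:
  assumes "iso_cell D \<phi>" "x \<in> Cel D" "y \<in> Cel D" "tgt D x = src D \<phi>" "tgt D y = src D \<phi>"
    and "cv D \<phi> x = cv D \<phi> y"
  shows "x = y"
proof -
  have "z = cv D (cinv D \<phi>) (cv D \<phi> z)" if "z \<in> Cel D" "tgt D z = src D \<phi>" for z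
  proof -
    have "z = cv D (cv D (cinv D \<phi>) \<phi>) z" using assms(1) that by simp
    also have "\<dots> = cv D (cinv D \<phi>) (cv D \<phi> z)"
      using assms(1) that by (intro cv_assoc) (simp_all add: iso_cell_in_Cel)
    finally show ?thesis .
  qed
  with assms show ?thesis by metis
qed

lemma iso_cell_cancel_right:
  assumes "iso_cell D \<phi>" "x \<in> Cel D" "y \<in> Cel D" "src D x = tgt D \<phi>" "src D y = tgt D \<phi>"
    and "cv D x \<phi> = cv D y \<phi>"
  shows "x = y"
proof -
  have "z = cv D (cv D z \<phi>) (cinv D \<phi>)" if "z \<in> Cel D" "src D z = tgt D \<phi>" for z
  proof -
    have "z = cv D z (cv D \<phi> (cinv D \<phi>))" using assms(1) that by simp
    also have "\<dots> = cv D (cv D z \<phi>) (cinv D \<phi>)"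
      using assms(1) that by (simp add: cv_assoc iso_cell_in_Cel)
    finally show ?thesis .
  qed
  with assms show ?thesis by metis
qed

lemma globular_boundary:
  assumes "globular D \<phi> J K"
  shows "\<phi> \<in> Cel D" "src D \<phi> = J" "tgt D \<phi> = K"
    "lft D \<phi> = vid D (hdom D J)" "rgt D \<phi> = vid D (hcod D J)" "J \<in> Hor D" "K \<in> Hor D"
    "hdom D K = hdom D J" "hcod D K = hcod D J"
proof -
  show \<phi>: "\<phi> \<in> Cel D" "src D \<phi> = J" "tgt D \<phi> = K"
    "lft D \<phi> = vid D (hdom D J)" "rgt D \<phi> = vid D (hcod D J)"
    using assms unfolding globular_def by auto
  show J: "J \<in> Hor D" "K \<in> Hor D" using \<phi> cell_boundary(1,2)[of \<phi>] by simp_all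
  show "hdom D K = hdom D J" "hcod D K = hcod D J" using cell_corners(2,4)[of \<phi>] \<phi> J by simp_all
qed

lemma cinv_globular:
  assumes "iso_cell D \<phi>" "globular D \<phi> J K"
  shows "globular D (cinv D \<phi>) K J"
proof -
  note \<phi> = globular_boundary[OF assms(2)]
  have "lft D (cinv D \<phi>) = vcmp D (lft D (cinv D \<phi>)) (lft D \<phi>)"
    using assms(1) \<phi> cell_corners(1)[of "cinv D \<phi>"] by simp
  also have "\<dots> = vid D (hdom D J)"
    using assms(1) \<phi> cv_boundary(4)[of \<phi> "cinv D \<phi>"] by simp
  finally have l: "lft D (cinv D \<phi>) = vid D (hdom D J)" .
  have "rgt D (cinv D \<phi>) = vcmp D (rgt D (cinv D \<phi>)) (rgt D \<phi>)"
    using assms(1) \<phi> cell_corners(3)[of "cinv D \<phi>"] by simp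
  also have "\<dots> = vid D (hcod D J)"
    using assms(1) \<phi> cv_boundary(5)[of \<phi> "cinv D \<phi>"] by simp
  finally have r: "rgt D (cinv D \<phi>) = vid D (hcod D J)" .
  show ?thesis unfolding globular_def using assms(1) \<phi> l r by simp
qed

lemma cinv_lu_boundary[simp]:
  assumes "J \<in> Hor D"
  shows "lft D (cinv D (lu D J)) = vid D (hdom D J)" "rgt D (cinv D (lu D J)) = vid D (hcod D J)"
proof -
  have "globular D (lu D J) (hcmp D (hun D (hdom D J)) J) J" using lu_axioms assms by blast
  from cinv_globular[OF _ this] assms
  show "lft D (cinv D (lu D J)) = vid D (hdom D J)" "rgt D (cinv D (lu D J)) = vid D (hcod D J)"
    unfolding globular_def by simp_all
qed

lemma iso_cell_cid[simp]: "J \<in> Hor D \<Longrightarrow> iso_cell D (cid D J)"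
  unfolding iso_cell_def by (intro conjI cid_boundary bexI[of _ "cid D J"]) auto

lemma iso_cell_cv:
  assumes "iso_cell D \<phi>" "iso_cell D \<psi>" "tgt D \<phi> = src D \<psi>"
  shows "iso_cell D (cv D \<psi> \<phi>)"
proof -
  have c: "\<phi> \<in> Cel D" "\<psi> \<in> Cel D" using assms iso_cell_in_Cel by auto
  show ?thesis unfolding iso_cell_def
  proof (intro conjI bexI[of _ "cv D (cinv D \<phi>) (cinv D \<psi>)"])
    show "cv D (cv D (cinv D \<phi>) (cinv D \<psi>)) (cv D \<psi> \<phi>) = cid D (src D (cv D \<psi> \<phi>))"
      using assms c by (simp add: cv_assoc, simp flip: cv_assoc)
    show "cv D (cv D \<psi> \<phi>) (cv D (cinv D \<phi>) (cinv D \<psi>)) = cid D (tgt D (cv D \<psi> \<phi>))"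
      using assms c by (simp add: cv_assoc, simp flip: cv_assoc)
  qed (use assms c in auto)
qed

lemma iso_cell_ch:
  assumes "iso_cell D \<phi>" "iso_cell D \<psi>" "globular D \<phi> J K" "globular D \<psi> J' K'" "hcod D J = hdom D J'"
  shows "iso_cell D (ch D \<phi> \<psi>)"
proof -
  note \<phi> = globular_boundary[OF assms(3)] and \<psi> = globular_boundary[OF assms(4)]
  note \<phi>' = globular_boundary[OF cinv_globular[OF assms(1,3)]]
    and \<psi>' = globular_boundary[OF cinv_globular[OF assms(2,4)]]
  have "hcod D K = hdom D K'" using \<phi>(9) \<psi>(8) assms(5) by simp
  note facts = assms(5) this \<phi>(1-7) \<psi>(1-7) \<phi>'(1-5) \<psi>'(1-5)
  show ?thesis unfolding iso_cell_def
  proof (intro conjI bexI[of _ "ch D (cinv D \<phi>) (cinv D \<psi>)"])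
    show "cv D (ch D (cinv D \<phi>) (cinv D \<psi>)) (ch D \<phi> \<psi>) = cid D (src D (ch D \<phi> \<psi>))"
      using assms(1,2) facts by (subst interchange[symmetric]) simp_all
    show "cv D (ch D \<phi> \<psi>) (ch D (cinv D \<phi>) (cinv D \<psi>)) = cid D (tgt D (ch D \<phi> \<psi>))"
      using assms(1,2) facts by (subst interchange[symmetric]) simp_all
  qed (use assms(1,2) facts in simp_all)
qed

lemma lu_hcmp:
  assumes J: "J \<in> Hor D" and H: "H \<in> Hor D" and JH: "hcod D J = hdom D H"
  shows "cv D (lu D (hcmp D J H)) (asc D (hun D (hdom D J)) J H) = ch D (lu D J) (cid D H)"
proof -
  define U where "U = hun D (hdom D J)"
  have U: "U \<in> Hor D" "hdom D U = hdom D J" "hcod D U = hdom D J" "hun D (hdom D J) = U"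
    using J U_def by auto
  note facts = J H JH U
  let ?JH = "hcmp D J H"
  let ?X1 = "cv D (lu D ?JH) (asc D U J H)"
  let ?X2 = "ch D (lu D J) (cid D H)"
  let ?R = "cv D (asc D U (hcmp D U J) H) (ch D (asc D U U J) (cid D H))"
  have R: "iso_cell D ?R"
    using facts by (intro iso_cell_cv iso_cell_ch[where J = "hcmp D (hcmp D U U) J" and J' = H])
      (simp_all add: globular_def)
  \<comment> \<open>Kelly's argument: the two sides agree after whiskering with the unit and precomposing the
    invertible \<open>?R\<close>, by the pentagon, the triangle and naturality of the associator.\<close>
  have "cv D (ch D (cid D U) ?X1) ?R = cv D (ch D (cid D U) ?X2) ?R"
  proof -
    have s1: "ch D (cid D U) ?X1 = cv D (ch D (cid D U) (lu D ?JH)) (ch D (cid D U) (asc D U J H))"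
      using interchange[of "cid D U" "cid D U" "asc D U J H" "lu D ?JH"] facts by simp
    have s2: "cv D (ch D (cid D U) (asc D U J H)) ?R = cv D (asc D U U ?JH) (asc D (hcmp D U U) J H)"
      using pentagon[of U U J H] facts by simp
    have s3: "cv D (ch D (cid D U) (lu D ?JH)) (asc D U U ?JH) = ch D (ru D U) (cid D ?JH)"
      using triangle[of U ?JH] facts by simp
    have s4: "cv D (ch D (ru D U) (cid D ?JH)) (asc D (hcmp D U U) J H)
        = cv D (asc D U J H) (ch D (ch D (ru D U) (cid D J)) (cid D H))"
      using asc_naturality[of "ru D U" "cid D J" "cid D H"] facts by simp
    have s5: "ch D (ru D U) (cid D J) = cv D (ch D (cid D U) (lu D J)) (asc D U U J)"
      using triangle[of U J] facts by simp
    have s6: "ch D (cv D (ch D (cid D U) (lu D J)) (asc D U U J)) (cid D H)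
        = cv D (ch D (ch D (cid D U) (lu D J)) (cid D H)) (ch D (asc D U U J) (cid D H))"
      using interchange[of "asc D U U J" "ch D (cid D U) (lu D J)" "cid D H" "cid D H"] facts by simp
    have s7: "cv D (asc D U J H) (ch D (ch D (cid D U) (lu D J)) (cid D H))
        = cv D (ch D (cid D U) ?X2) (asc D U (hcmp D U J) H)"
      using asc_naturality[of "cid D U" "lu D J" "cid D H"] facts by simp
    have "cv D (ch D (cid D U) ?X1) ?R
        = cv D (ch D (cid D U) (lu D ?JH)) (cv D (ch D (cid D U) (asc D U J H)) ?R)"
      unfolding s1 using facts by (intro cv_assoc) simp_all
    also have "\<dots> = cv D (ch D (cid D U) (lu D ?JH)) (cv D (asc D U U ?JH) (asc D (hcmp D U U) J H))"
      unfolding s2 ..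
    also have "\<dots> = cv D (ch D (ru D U) (cid D ?JH)) (asc D (hcmp D U U) J H)"
      unfolding s3[symmetric] using facts by (intro cv_assoc[symmetric]) simp_all
    also have "\<dots> = cv D (asc D U J H)
        (cv D (ch D (ch D (cid D U) (lu D J)) (cid D H)) (ch D (asc D U U J) (cid D H)))"
      unfolding s4 s5 s6 ..
    also have "\<dots> = cv D (cv D (asc D U J H) (ch D (ch D (cid D U) (lu D J)) (cid D H)))
        (ch D (asc D U U J) (cid D H))"
      using facts by (intro cv_assoc[symmetric]) simp_all
    also have "\<dots> = cv D (ch D (cid D U) ?X2) ?R"
      unfolding s7 using facts by (intro cv_assoc) simp_all
    finally show ?thesis .
  qed
  then have whiskered: "ch D (cid D U) ?X1 = ch D (cid D U) ?X2"
    by (rule iso_cell_cancel_right[OF R, rotated -1]) (use facts in simp_all)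
  have "cv D ?X1 (lu D (hcmp D (hcmp D U J) H)) = cv D ?X2 (lu D (hcmp D (hcmp D U J) H))"
    using lu_naturality[of ?X1] lu_naturality[of ?X2] whiskered facts by simp
  then have "?X1 = ?X2"
    by (rule iso_cell_cancel_right[rotated -1]) (use facts in simp_all)
  then show ?thesis unfolding U_def .
qed

lemma lu_hun_eq_ru_hun:
  assumes A: "A \<in> Ob D"
  shows "lu D (hun D A) = ru D (hun D A)"
proof -
  define U where "U = hun D A"
  have U: "U \<in> Hor D" "hdom D U = A" "hcod D U = A" "hun D A = U" using A U_def by auto
  note facts = U A
  have "lu D (hcmp D U U) = ch D (cid D U) (lu D U)"
    using iso_cell_cancel_left[of "lu D U" "lu D (hcmp D U U)" "ch D (cid D U) (lu D U)"]
      lu_naturality[of "lu D U"] facts by simp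
  moreover have "cv D (lu D (hcmp D U U)) (asc D U U U) = ch D (lu D U) (cid D U)"
    using lu_hcmp[of U U] facts by simp
  moreover have "cv D (ch D (cid D U) (lu D U)) (asc D U U U) = ch D (ru D U) (cid D U)"
    using triangle[of U U] facts by simp
  ultimately have "ch D (lu D U) (cid D U) = ch D (ru D U) (cid D U)" by simp
  moreover have "cv D (lu D U) (ru D (hcmp D U U)) = cv D (ru D U) (ch D (lu D U) (cid D U))"
    "cv D (ru D U) (ru D (hcmp D U U)) = cv D (ru D U) (ch D (ru D U) (cid D U))"
    using ru_naturality[of "lu D U"] ru_naturality[of "ru D U"] facts by simp_all
  ultimately have "lu D U = ru D U"
    using iso_cell_cancel_right[of "ru D (hcmp D U U)" "lu D U" "ru D U"] facts by simp
  then show ?thesis unfolding U_def .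
qed

end

section \<open>Companions\<close>

text \<open>Binding cells in the sense of Grandis and Pare; the last equation says that
  \<open>q \<odot> p\<close> is the identity of \<open>src p\<close> up to the unitors.\<close>

definition companion_pair :: "('o,'v,'h,'c) dblcat \<Rightarrow> 'v \<Rightarrow> 'c \<Rightarrow> 'c \<Rightarrow> bool" where
  "companion_pair D f p q \<longleftrightarrow> f \<in> Ver D \<and> p \<in> Cel D \<and> q \<in> Cel D \<and>
     tgt D p = hun D (vcod D f) \<and> lft D p = f \<and> rgt D p = vid D (vcod D f) \<and>
     src D q = hun D (vdom D f) \<and> tgt D q = src D p \<and> lft D q = vid D (vdom D f) \<and> rgt D q = f \<and>
     cv D p q = cun D f \<and> cv D (ru D (src D p)) (ch D q p) = lu D (src D p)"

context double_cat
begin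

lemma cartesian_cancel:
  assumes "cartesian D p" "\<theta> \<in> Cel D" "\<theta>' \<in> Cel D" "src D \<theta> = src D \<theta>'"
    and "tgt D \<theta> = src D p" "tgt D \<theta>' = src D p" "lft D \<theta> = lft D \<theta>'" "rgt D \<theta> = rgt D \<theta>'"
    and "cv D p \<theta> = cv D p \<theta>'"
  shows "\<theta> = \<theta>'"
proof -
  have p: "p \<in> Cel D" using assms(1) unfolding cartesian_def by blast
  have "\<exists>!\<theta>''. \<theta>'' \<in> Cel D \<and> src D \<theta>'' = src D (cv D p \<theta>) \<and> tgt D \<theta>'' = src D p \<and>
      lft D \<theta>'' = lft D \<theta> \<and> rgt D \<theta>'' = rgt D \<theta> \<and> cv D p \<theta>'' = cv D p \<theta>"
    using assms(1)[unfolded cartesian_def, THEN conjunct2, rule_format, of "cv D p \<theta>" "lft D \<theta>" "rgt D \<theta>"]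
      assms(2,5) p cell_corners(1,2,3,4)[of \<theta>] cell_corners(1,3)[of p]
    by (simp add: vseq_def)
  then show ?thesis using assms p by (metis cv_boundary(2))
qed

lemma companion_cellD:
  assumes "companion_cell D f p"
  shows "f \<in> Ver D" "cartesian D p" "p \<in> Cel D" "src D p \<in> Hor D"
    "hdom D (src D p) = vdom D f" "hcod D (src D p) = vcod D f"
    "tgt D p = hun D (vcod D f)" "lft D p = f" "rgt D p = vid D (vcod D f)"
proof -
  show f: "f \<in> Ver D" "cartesian D p" "tgt D p = hun D (vcod D f)" "lft D p = f" "rgt D p = vid D (vcod D f)"
    using assms unfolding companion_cell_def by auto
  show p: "p \<in> Cel D" using f unfolding cartesian_def by blast
  show "src D p \<in> Hor D" using p by simp
  show "hdom D (src D p) = vdom D f" "hcod D (src D p) = vcod D f"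
    using p f cell_corners(1,3)[of p] by simp_all
qed

lemma companion_unit_boundary:
  assumes "companion_cell D f p"
  shows "companion_unit D f p \<in> Cel D" "src D (companion_unit D f p) = hun D (vdom D f)"
    "tgt D (companion_unit D f p) = src D p" "lft D (companion_unit D f p) = vid D (vdom D f)"
    "rgt D (companion_unit D f p) = f" "cv D p (companion_unit D f p) = cun D f"
proof -
  note p = companion_cellD[OF assms]
  have "\<exists>!q. q \<in> Cel D \<and> src D q = src D (cun D f) \<and> tgt D q = src D p \<and>
      lft D q = vid D (vdom D f) \<and> rgt D q = f \<and> cv D p q = cun D f"
    using p(2)[unfolded cartesian_def, THEN conjunct2, rule_format, of "cun D f" "vid D (vdom D f)" f] p
    by (simp add: vseq_def)
  then have "\<exists>!q. q \<in> Cel D \<and> src D q = hun D (vdom D f) \<and> tgt D q = src D p \<and>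
      lft D q = vid D (vdom D f) \<and> rgt D q = f \<and> cv D p q = cun D f" (is "\<exists>!q. ?unit q")
    using p by simp
  then have "?unit (companion_unit D f p)"
    unfolding companion_unit_def by (rule theI')
  then show "companion_unit D f p \<in> Cel D" "src D (companion_unit D f p) = hun D (vdom D f)"
    "tgt D (companion_unit D f p) = src D p" "lft D (companion_unit D f p) = vid D (vdom D f)"
    "rgt D (companion_unit D f p) = f" "cv D p (companion_unit D f p) = cun D f"
    by simp_all
qed

lemma companion_pairD:
  assumes "companion_pair D f p q"
  shows "f \<in> Ver D" "p \<in> Cel D" "q \<in> Cel D"
    "tgt D p = hun D (vcod D f)" "lft D p = f" "rgt D p = vid D (vcod D f)"
    "src D q = hun D (vdom D f)" "tgt D q = src D p" "lft D q = vid D (vdom D f)" "rgt D q = f"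
    "cv D p q = cun D f" "cv D (ru D (src D p)) (ch D q p) = lu D (src D p)"
    "src D p \<in> Hor D" "hdom D (src D p) = vdom D f" "hcod D (src D p) = vcod D f"
proof -
  show p: "f \<in> Ver D" "p \<in> Cel D" "q \<in> Cel D"
    "tgt D p = hun D (vcod D f)" "lft D p = f" "rgt D p = vid D (vcod D f)"
    "src D q = hun D (vdom D f)" "tgt D q = src D p" "lft D q = vid D (vdom D f)" "rgt D q = f"
    "cv D p q = cun D f" "cv D (ru D (src D p)) (ch D q p) = lu D (src D p)"
    using assms unfolding companion_pair_def by auto
  then show "src D p \<in> Hor D" "hdom D (src D p) = vdom D f" "hcod D (src D p) = vcod D f"
    using cell_corners(1,3)[of p] by simp_all
qed

lemma companion_cell_pair:
  assumes "companion_cell D f p"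
  shows "companion_pair D f p (companion_unit D f p)"
proof -
  define q where "q = companion_unit D f p"
  let ?J = "src D p" and ?U = "hun D (vcod D f)"
  note facts = companion_cellD[OF assms] companion_unit_boundary[OF assms, folded q_def]
  have "cv D p (cv D (ru D ?J) (ch D q p)) = cv D (cv D p (ru D ?J)) (ch D q p)"
    using facts by (intro cv_assoc[symmetric]) simp_all
  also have "\<dots> = cv D (cv D (ru D ?U) (ch D p (cid D ?U))) (ch D q p)"
    using ru_naturality[of p] facts by simp
  also have "\<dots> = cv D (ru D ?U) (cv D (ch D p (cid D ?U)) (ch D q p))"
    using facts by (intro cv_assoc) simp_all
  also have "\<dots> = cv D (ru D ?U) (ch D (cun D f) p)"
    using interchange[of q p p "cid D ?U"] facts by simp
  also have "\<dots> = cv D p (lu D ?J)"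
    using lu_naturality[of p] lu_hun_eq_ru_hun[of "vcod D f"] facts by simp
  finally have "cv D (ru D ?J) (ch D q p) = lu D ?J"
    by (rule cartesian_cancel[OF facts(2), rotated -1]) (use facts in simp_all)
  then show ?thesis
    using facts unfolding companion_pair_def q_def by simp
qed

lemma companion_pair_restore:
  assumes cp: "companion_pair D f p q"
    and \<theta>: "\<theta> \<in> Cel D" "tgt D \<theta> = src D p" "rgt D \<theta> = vid D (vcod D f)"
  shows "cv D (ru D (src D p)) (ch D (cv D q (cun D (lft D \<theta>))) (cv D p \<theta>)) = cv D \<theta> (lu D (src D \<theta>))"
proof -
  note facts = companion_pairD[OF cp]
  have h: "vcod D (lft D \<theta>) = vdom D f" "vdom D (lft D \<theta>) = hdom D (src D \<theta>)"
    using \<theta> facts cell_corners(1,2)[of \<theta>] by simp_all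
  have "ch D (cv D q (cun D (lft D \<theta>))) (cv D p \<theta>) = cv D (ch D q p) (ch D (cun D (lft D \<theta>)) \<theta>)"
    using interchange[of "cun D (lft D \<theta>)" q \<theta> p] facts \<theta> h by simp
  then have "cv D (ru D (src D p)) (ch D (cv D q (cun D (lft D \<theta>))) (cv D p \<theta>))
      = cv D (ru D (src D p)) (cv D (ch D q p) (ch D (cun D (lft D \<theta>)) \<theta>))"
    by simp
  also have "\<dots> = cv D (cv D (ru D (src D p)) (ch D q p)) (ch D (cun D (lft D \<theta>)) \<theta>)"
    by (intro cv_assoc[symmetric]) (use facts \<theta> h in simp_all)
  also have "\<dots> = cv D \<theta> (lu D (src D \<theta>))"
    using lu_naturality[of \<theta>] facts \<theta> by simp
  finally show ?thesis .
qed

lemma companion_pair_cancel: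
  assumes cp: "companion_pair D f p q"
    and "\<theta> \<in> Cel D" "\<theta>' \<in> Cel D" "src D \<theta> = src D \<theta>'" "tgt D \<theta> = src D p" "tgt D \<theta>' = src D p"
    and "lft D \<theta> = lft D \<theta>'" "rgt D \<theta> = vid D (vcod D f)" "rgt D \<theta>' = vid D (vcod D f)"
    and "cv D p \<theta> = cv D p \<theta>'"
  shows "\<theta> = \<theta>'"
proof -
  have "cv D \<theta> (lu D (src D \<theta>)) = cv D \<theta>' (lu D (src D \<theta>))"
    using companion_pair_restore[OF cp, of \<theta>] companion_pair_restore[OF cp, of \<theta>'] assms(2-10)
    by simp
  then show ?thesis
    by (rule iso_cell_cancel_right[rotated -1]) (use assms(2-4) in simp_all)
qed

lemma companion_pair_hcmp_restore:
  assumes cp: "companion_pair D f p q" and Q: "Q \<in> Hor D" "hdom D Q = vcod D f"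
    and \<theta>: "\<theta> \<in> Cel D" "tgt D \<theta> = hcmp D (src D p) Q" "lft D \<theta> = vid D (vdom D f)"
  shows "ch D q (cv D (cv D (lu D Q) (ch D p (cid D Q))) \<theta>) = cv D \<theta> (lu D (src D \<theta>))"
proof -
  define E U where "E = cv D (lu D Q) (ch D p (cid D Q))" and "U = hun D (vdom D f)"
  let ?P = "src D p"
  note facts = companion_pairD[OF cp] Q \<theta>
  have U: "U \<in> Hor D" "hdom D U = vdom D f" "hcod D U = vdom D f" "hun D (vdom D f) = U"
    using facts U_def by auto
  have \<theta>A: "hdom D (src D \<theta>) = vdom D f" using \<theta> facts cell_corners(1)[of \<theta>] by simp
  note facts = facts U \<theta>A
  have E: "E \<in> Cel D" "src D E = hcmp D ?P Q" "tgt D E = Q" "lft D E = f" "rgt D E = vid D (hcod D Q)"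
    using facts E_def by auto
  have i1: "ch D q (cv D E \<theta>) = cv D (ch D q E) (ch D (cid D U) \<theta>)"
    using interchange[of "cid D U" q \<theta> E] facts E by simp
  have i2: "ch D q E = cv D (ch D (cid D ?P) (lu D Q)) (ch D q (ch D p (cid D Q)))"
    using interchange[of q "cid D ?P" "ch D p (cid D Q)" "lu D Q"] facts E_def by simp
  have "cv D (ch D q E) (asc D U ?P Q)
      = cv D (ch D (cid D ?P) (lu D Q)) (cv D (ch D q (ch D p (cid D Q))) (asc D U ?P Q))"
    unfolding i2 using facts by (intro cv_assoc) simp_all
  also have "\<dots> = cv D (ch D (cid D ?P) (lu D Q))
      (cv D (asc D ?P (hun D (vcod D f)) Q) (ch D (ch D q p) (cid D Q)))"
    using asc_naturality[of q p "cid D Q"] facts by simp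
  also have "\<dots> = cv D (ch D (ru D ?P) (cid D Q)) (ch D (ch D q p) (cid D Q))"
    using triangle[of ?P Q] facts by (simp flip: cv_assoc)
  also have "\<dots> = ch D (lu D ?P) (cid D Q)"
    using interchange[of "ch D q p" "ru D ?P" "cid D Q" "cid D Q"] facts by simp
  also have "\<dots> = cv D (lu D (hcmp D ?P Q)) (asc D U ?P Q)"
    using lu_hcmp[of ?P Q] facts by simp
  finally have "ch D q E = lu D (hcmp D ?P Q)"
    by (rule iso_cell_cancel_right[rotated -1]) (use facts E i2 in simp_all)
  then have "ch D q (cv D E \<theta>) = cv D (lu D (hcmp D ?P Q)) (ch D (cid D U) \<theta>)"
    using i1 by simp
  also have "\<dots> = cv D \<theta> (lu D (src D \<theta>))"
    using lu_naturality[of \<theta>] facts by simp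
  finally show ?thesis unfolding E_def .
qed

end

text \<open>For companions \<open>p, q\<close> of \<open>f\<close> and \<open>p', q'\<close> of \<open>g\<close>, the binding cells exhibiting
  \<open>src p \<odot> src p'\<close> as a companion of \<open>g \<circ> f\<close>.\<close>

definition companion_comp_cell :: "('o,'v,'h,'c) dblcat \<Rightarrow> 'c \<Rightarrow> 'c \<Rightarrow> 'c" where
  "companion_comp_cell D p p' = cv D (lu D (tgt D p')) (ch D (cv D (cun D (lft D p')) p) p')"

definition companion_comp_unit :: "('o,'v,'h,'c) dblcat \<Rightarrow> 'c \<Rightarrow> 'c \<Rightarrow> 'c" where
  "companion_comp_unit D q q' = cv D (ch D q (cv D q' (cun D (rgt D q)))) (cinv D (lu D (src D q)))"

context double_cat
begin

lemma companion_comp_boundary: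
  assumes cp: "companion_pair D f p q" and cp': "companion_pair D g p' q'" and fg: "vcod D f = vdom D g"
  shows "companion_comp_cell D p p' \<in> Cel D"
    "src D (companion_comp_cell D p p') = hcmp D (src D p) (src D p')"
    "tgt D (companion_comp_cell D p p') = hun D (vcod D g)"
    "lft D (companion_comp_cell D p p') = vcmp D g f"
    "rgt D (companion_comp_cell D p p') = vid D (vcod D g)"
    "companion_comp_unit D q q' \<in> Cel D"
    "src D (companion_comp_unit D q q') = hun D (vdom D f)"
    "tgt D (companion_comp_unit D q q') = hcmp D (src D p) (src D p')"
    "lft D (companion_comp_unit D q q') = vid D (vdom D f)"
    "rgt D (companion_comp_unit D q q') = vcmp D g f"
  using companion_pairD[OF cp] companion_pairD[OF cp'] fg
  unfolding companion_comp_cell_def companion_comp_unit_def by auto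

lemma companion_comp_cell_unit:
  assumes cp: "companion_pair D f p q" and cp': "companion_pair D g p' q'" and fg: "vcod D f = vdom D g"
  shows "cv D (companion_comp_cell D p p') (companion_comp_unit D q q') = cun D (vcmp D g f)"
proof -
  let ?U = "hun D (vdom D f)" and ?gf = "vcmp D g f"
  note facts = companion_pairD[OF cp] companion_pairD[OF cp'] fg
  have gf: "cun D ?gf = cv D (cun D g) (cun D f)" using facts cun_vcmp by simp
  have left: "cv D (cv D (cun D g) p) q = cun D ?gf"
    using facts gf by (subst cv_assoc) simp_all
  have right: "cv D p' (cv D q' (cun D f)) = cun D ?gf"
    using facts gf by (subst cv_assoc[symmetric]) simp_all
  have "cv D (companion_comp_cell D p p') (companion_comp_unit D q q')
      = cv D (lu D (hun D (vcod D g)))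
          (cv D (cv D (ch D (cv D (cun D g) p) p') (ch D q (cv D q' (cun D f)))) (cinv D (lu D ?U)))"
    unfolding companion_comp_cell_def companion_comp_unit_def using facts
    by (simp add: cv_assoc)
  also have "\<dots> = cv D (lu D (hun D (vcod D g))) (cv D (ch D (cun D ?gf) (cun D ?gf)) (cinv D (lu D ?U)))"
    using interchange[of q "cv D (cun D g) p" "cv D q' (cun D f)" p'] facts left right by simp
  also have "\<dots> = cv D (cv D (lu D (hun D (vcod D g))) (ch D (cun D ?gf) (cun D ?gf))) (cinv D (lu D ?U))"
    using facts by (intro cv_assoc[symmetric]) simp_all
  also have "\<dots> = cv D (cv D (cun D ?gf) (lu D ?U)) (cinv D (lu D ?U))"
    using lu_naturality[of "cun D ?gf"] facts by simp
  also have "\<dots> = cun D ?gf"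
    using facts by (subst cv_assoc) simp_all
  finally show ?thesis .
qed

lemma companion_comp_cell_eq:
  assumes cp: "companion_pair D f p q" and cp': "companion_pair D g p' q'" and fg: "vcod D f = vdom D g"
  shows "companion_comp_cell D p p' = cv D p' (cv D (lu D (src D p')) (ch D p (cid D (src D p'))))"
proof -
  note facts = companion_pairD[OF cp] companion_pairD[OF cp'] fg
  have "cv D p' (cv D (lu D (src D p')) (ch D p (cid D (src D p'))))
      = cv D (cv D p' (lu D (src D p'))) (ch D p (cid D (src D p')))"
    using facts by (intro cv_assoc[symmetric]) simp_all
  also have "\<dots> = cv D (cv D (lu D (tgt D p')) (ch D (cun D g) p')) (ch D p (cid D (src D p')))"
    using lu_naturality[of p'] facts by simp
  also have "\<dots> = cv D (lu D (tgt D p')) (cv D (ch D (cun D g) p') (ch D p (cid D (src D p'))))"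
    using facts by (intro cv_assoc) simp_all
  also have "\<dots> = companion_comp_cell D p p'"
    unfolding companion_comp_cell_def using interchange[of p "cun D g" "cid D (src D p')" p'] facts
    by simp
  finally show ?thesis by simp
qed

lemma companion_comp_cell_cancel:
  assumes cp: "companion_pair D f p q" and cp': "companion_pair D g p' q'" and fg: "vcod D f = vdom D g"
    and "\<theta> \<in> Cel D" "\<theta>' \<in> Cel D" "src D \<theta> = src D \<theta>'"
    and "tgt D \<theta> = hcmp D (src D p) (src D p')" "tgt D \<theta>' = hcmp D (src D p) (src D p')"
    and "lft D \<theta> = vid D (vdom D f)" "lft D \<theta>' = vid D (vdom D f)"
    and "rgt D \<theta> = vid D (vcod D g)" "rgt D \<theta>' = vid D (vcod D g)"
    and "cv D (companion_comp_cell D p p') \<theta> = cv D (companion_comp_cell D p p') \<theta>'"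
  shows "\<theta> = \<theta>'"
proof -
  define E where "E = cv D (lu D (src D p')) (ch D p (cid D (src D p')))"
  note facts = companion_pairD[OF cp] companion_pairD[OF cp'] fg assms(4-12)
  have E: "E \<in> Cel D" "src D E = hcmp D (src D p) (src D p')" "tgt D E = src D p'" "lft D E = f"
    "rgt D E = vid D (vcod D g)"
    using facts E_def by auto
  have "cv D p' (cv D E \<theta>) = cv D p' (cv D E \<theta>')"
    using assms(13) companion_comp_cell_eq[OF cp cp' fg, folded E_def] facts E by (simp add: cv_assoc)
  then have "cv D E \<theta> = cv D E \<theta>'"
    by (rule companion_pair_cancel[OF cp', rotated -1]) (use facts E in simp_all)
  then have "cv D \<theta> (lu D (src D \<theta>)) = cv D \<theta>' (lu D (src D \<theta>))"
    using companion_pair_hcmp_restore[OF cp, of "src D p'" \<theta>]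
      companion_pair_hcmp_restore[OF cp, of "src D p'" \<theta>'] facts
    unfolding E_def by simp
  then show ?thesis
    by (rule iso_cell_cancel_right[rotated -1]) (use facts in simp_all)
qed

lemma companion_unit_factorisation:
  assumes d: "d \<in> Cel D" "tgt D d = hun D (vcod D g)" "lft D d = g" "rgt D d = vid D (vcod D g)"
    and u: "u \<in> Cel D" "src D u = hun D (vdom D g)" "tgt D u = src D d" "lft D u = vid D (vdom D g)"
      "rgt D u = g" "cv D d u = cun D g"
    and c: "c \<in> Cel D" "tgt D c = hun D (vcod D g)" "lft D c = g" "rgt D c = vid D (vcod D g)"
  defines "y \<equiv> cv D (ru D (src D d)) (cv D (ch D u c) (cinv D (lu D (src D c))))"
  shows "y \<in> Cel D" "src D y = src D c" "tgt D y = src D d" "lft D y = vid D (vdom D g)"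
    "rgt D y = vid D (vcod D g)" "cv D d y = c"
proof -
  let ?U = "hun D (vcod D g)"
  have g: "g \<in> Ver D" using d by auto
  have corners: "hdom D (src D c) = vdom D g" "hcod D (src D c) = vcod D g"
      "hdom D (src D d) = vdom D g" "hcod D (src D d) = vcod D g"
    using c d g cell_corners(1,3)[of c] cell_corners(1,3)[of d] by simp_all
  note facts = d u c g corners
  show y: "y \<in> Cel D" "src D y = src D c" "tgt D y = src D d" "lft D y = vid D (vdom D g)"
    "rgt D y = vid D (vcod D g)"
    unfolding y_def using facts by simp_all
  have "cv D d y = cv D (cv D d (ru D (src D d))) (cv D (ch D u c) (cinv D (lu D (src D c))))"
    unfolding y_def using facts by (intro cv_assoc[symmetric]) simp_all
  also have "\<dots> = cv D (cv D (ru D ?U) (ch D d (cid D ?U))) (cv D (ch D u c) (cinv D (lu D (src D c))))"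
    using ru_naturality[of d] facts by simp
  also have "\<dots> = cv D (ru D ?U) (cv D (cv D (ch D d (cid D ?U)) (ch D u c)) (cinv D (lu D (src D c))))"
    using facts by (simp add: cv_assoc)
  also have "\<dots> = cv D (lu D ?U) (cv D (ch D (cun D g) c) (cinv D (lu D (src D c))))"
    using interchange[of u d c "cid D ?U"] lu_hun_eq_ru_hun[of "vcod D g"] facts by simp
  also have "\<dots> = cv D (cv D (lu D ?U) (ch D (cun D g) c)) (cinv D (lu D (src D c)))"
    using facts by (intro cv_assoc[symmetric]) simp_all
  also have "\<dots> = cv D (cv D c (lu D (src D c))) (cinv D (lu D (src D c)))"
    using lu_naturality[of c] facts by simp
  also have "\<dots> = c"
    using facts by (subst cv_assoc) simp_all
  finally show "cv D d y = c" .
qed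

lemma companion_comparison_iso:
  assumes H: "companion_pair D f p q" "companion_pair D g p' q'" "vcod D f = vdom D g"
    and K: "companion_pair D f1 p1 q1" "companion_pair D g1 p1' q1'" "vcod D f1 = vdom D g1"
    and same_composite: "vcmp D g1 f1 = vcmp D g f"
    and X: "X \<in> Cel D" "src D X = hcmp D (src D p) (src D p')" "tgt D X = hcmp D (src D p1) (src D p1')"
      "lft D X = vid D (vdom D f)" "rgt D X = vid D (vcod D g)"
    and comparison: "cv D (companion_comp_cell D p1 p1') X = companion_comp_cell D p p'"
  shows "iso_cell D X"
proof -
  let ?d = "companion_comp_cell D p p'" and ?c = "companion_comp_cell D p1 p1'"
  let ?gf = "vcmp D g f"
  note d = companion_comp_boundary(1-5)[OF H] and u = companion_comp_boundary(6-10)[OF H]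
  note c = companion_comp_boundary(1-5)[OF K]
  note facts = companion_pairD[OF H(1)] companion_pairD[OF H(2)] H(3)
    companion_pairD[OF K(1)] companion_pairD[OF K(2)] K(3)
  have ends: "vdom D ?gf = vdom D f" "vcod D ?gf = vcod D g" "vdom D f1 = vdom D f" "vcod D g1 = vcod D g"
    using facts arg_cong[OF same_composite, of "vdom D"] arg_cong[OF same_composite, of "vcod D"]
    by simp_all
  obtain Y where Y: "Y \<in> Cel D" "src D Y = src D ?c" "tgt D Y = src D ?d"
      "lft D Y = vid D (vdom D f)" "rgt D Y = vid D (vcod D g)" "cv D ?d Y = ?c"
    using companion_unit_factorisation[of ?d ?gf "companion_comp_unit D q q'" ?c]
      d u c companion_comp_cell_unit[OF H] same_composite ends
    by (metis (no_types, lifting))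
  have "cv D ?d (cv D Y X) = cv D ?d (cid D (src D X))"
    using Y X d c comparison by (simp flip: cv_assoc)
  then have YX: "cv D Y X = cid D (src D X)"
    by (rule companion_comp_cell_cancel[OF H, rotated -1]) (use X Y d c facts ends in simp_all)
  have "cv D ?c (cv D X Y) = cv D ?c (cid D (src D Y))"
    using Y X d c comparison by (simp flip: cv_assoc)
  then have XY: "cv D X Y = cid D (src D Y)"
    by (rule companion_comp_cell_cancel[OF K, rotated -1]) (use X Y d c facts ends in simp_all)
  show ?thesis
    unfolding iso_cell_def using X Y YX XY d c by (intro conjI bexI[of _ Y]) simp_all
qed

end

section \<open>Normal lax endofunctors and their units\<close>

locale normal_lax_endofunctor = double_cat +
  fixes T :: "('o,'v,'h,'c) ldf"
  assumes normal_lax: "normal_lax_double_functor D T"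
begin

lemma normal_lax_double_functor_conjuncts:
  shows fo_axiom: "\<forall>A \<in> Ob D. fo T A \<in> Ob D"
    and fv_axioms: "\<forall>f \<in> Ver D. fv T f \<in> Ver D \<and> vdom D (fv T f) = fo T (vdom D f)
        \<and> vcod D (fv T f) = fo T (vcod D f)"
    and fh_axioms: "\<forall>J \<in> Hor D. fh T J \<in> Hor D \<and> hdom D (fh T J) = fo T (hdom D J)
        \<and> hcod D (fh T J) = fo T (hcod D J)"
    and fc_axioms: "\<forall>\<phi> \<in> Cel D. fc T \<phi> \<in> Cel D \<and> src D (fc T \<phi>) = fh T (src D \<phi>)
        \<and> tgt D (fc T \<phi>) = fh T (tgt D \<phi>) \<and> lft D (fc T \<phi>) = fv T (lft D \<phi>) \<and> rgt D (fc T \<phi>) = fv T (rgt D \<phi>)"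
    and fv_vid_axiom: "\<forall>A \<in> Ob D. fv T (vid D A) = vid D (fo T A)"
    and fc_cv_axiom: "\<forall>\<phi> \<psi>. cvseq D \<psi> \<phi> \<longrightarrow> fc T (cv D \<psi> \<phi>) = cv D (fc T \<psi>) (fc T \<phi>)"
    and fh_hun_axiom: "\<forall>A \<in> Ob D. fh T (hun D A) = hun D (fo T A)"
    and fc_cun_axiom: "\<forall>f \<in> Ver D. fc T (cun D f) = cun D (fv T f)"
    and fcmp_axiom: "\<forall>J H. hseq D J H \<longrightarrow>
        globular D (fcmp T J H) (hcmp D (fh T J) (fh T H)) (fh T (hcmp D J H))"
    and fcmp_naturality_axiom: "\<forall>\<phi> \<psi>. chseq D \<phi> \<psi> \<longrightarrow>
        cv D (fc T (ch D \<phi> \<psi>)) (fcmp T (src D \<phi>) (src D \<psi>))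
        = cv D (fcmp T (tgt D \<phi>) (tgt D \<psi>)) (ch D (fc T \<phi>) (fc T \<psi>))"
    and fcmp_lu_axiom: "\<forall>J \<in> Hor D. cv D (fc T (lu D J)) (fcmp T (hun D (hdom D J)) J) = lu D (fh T J)"
    and fcmp_ru_axiom: "\<forall>J \<in> Hor D. cv D (fc T (ru D J)) (fcmp T J (hun D (hcod D J))) = ru D (fh T J)"
  using normal_lax unfolding normal_lax_double_functor_def by - (elim conjE; assumption)+

lemma functor_boundary[simp]:
  "A \<in> Ob D \<Longrightarrow> fo T A \<in> Ob D"
  "f \<in> Ver D \<Longrightarrow> fv T f \<in> Ver D"
  "f \<in> Ver D \<Longrightarrow> vdom D (fv T f) = fo T (vdom D f)"
  "f \<in> Ver D \<Longrightarrow> vcod D (fv T f) = fo T (vcod D f)"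
  "J \<in> Hor D \<Longrightarrow> fh T J \<in> Hor D"
  "J \<in> Hor D \<Longrightarrow> hdom D (fh T J) = fo T (hdom D J)"
  "J \<in> Hor D \<Longrightarrow> hcod D (fh T J) = fo T (hcod D J)"
  "\<phi> \<in> Cel D \<Longrightarrow> fc T \<phi> \<in> Cel D"
  "\<phi> \<in> Cel D \<Longrightarrow> src D (fc T \<phi>) = fh T (src D \<phi>)"
  "\<phi> \<in> Cel D \<Longrightarrow> tgt D (fc T \<phi>) = fh T (tgt D \<phi>)"
  "\<phi> \<in> Cel D \<Longrightarrow> lft D (fc T \<phi>) = fv T (lft D \<phi>)"
  "\<phi> \<in> Cel D \<Longrightarrow> rgt D (fc T \<phi>) = fv T (rgt D \<phi>)"
  "A \<in> Ob D \<Longrightarrow> fv T (vid D A) = vid D (fo T A)"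
  "A \<in> Ob D \<Longrightarrow> fh T (hun D A) = hun D (fo T A)"
  "f \<in> Ver D \<Longrightarrow> fc T (cun D f) = cun D (fv T f)"
  using fo_axiom fv_axioms fh_axioms fc_axioms fv_vid_axiom fh_hun_axiom fc_cun_axiom by blast+

lemma fc_cv:
  "\<phi> \<in> Cel D \<Longrightarrow> \<psi> \<in> Cel D \<Longrightarrow> tgt D \<phi> = src D \<psi> \<Longrightarrow> fc T (cv D \<psi> \<phi>) = cv D (fc T \<psi>) (fc T \<phi>)"
  using fc_cv_axiom unfolding cvseq_def by blast

lemma fcmp_boundary[simp]:
  assumes "J \<in> Hor D" "H \<in> Hor D" "hcod D J = hdom D H"
  shows "fcmp T J H \<in> Cel D" "src D (fcmp T J H) = hcmp D (fh T J) (fh T H)"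
    "tgt D (fcmp T J H) = fh T (hcmp D J H)"
    "lft D (fcmp T J H) = vid D (fo T (hdom D J))" "rgt D (fcmp T J H) = vid D (fo T (hcod D H))"
  using fcmp_axiom assms unfolding globular_def hseq_def by simp_all

lemma fcmp_naturality:
  "\<phi> \<in> Cel D \<Longrightarrow> \<psi> \<in> Cel D \<Longrightarrow> hcod D (src D \<phi>) = hdom D (src D \<psi>) \<Longrightarrow> rgt D \<phi> = lft D \<psi> \<Longrightarrow>
    cv D (fc T (ch D \<phi> \<psi>)) (fcmp T (src D \<phi>) (src D \<psi>))
      = cv D (fcmp T (tgt D \<phi>) (tgt D \<psi>)) (ch D (fc T \<phi>) (fc T \<psi>))"
  using fcmp_naturality_axiom unfolding chseq_def by blast

lemma fcmp_unitors:
  "J \<in> Hor D \<Longrightarrow> cv D (fc T (lu D J)) (fcmp T (hun D (hdom D J)) J) = lu D (fh T J)"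
  "J \<in> Hor D \<Longrightarrow> cv D (fc T (ru D J)) (fcmp T J (hun D (hcod D J))) = ru D (fh T J)"
  using fcmp_lu_axiom fcmp_ru_axiom by blast+

lemma companion_pair_fc:
  assumes cp: "companion_pair D f p q"
  shows "companion_pair D (fv T f) (fc T p) (fc T q)"
proof -
  let ?J = "src D p" and ?A = "vdom D f" and ?C = "vcod D f"
  note facts = companion_pairD[OF cp]
  have "cv D (ru D (fh T ?J)) (ch D (fc T q) (fc T p))
      = cv D (cv D (fc T (ru D ?J)) (fcmp T ?J (hun D ?C))) (ch D (fc T q) (fc T p))"
    using fcmp_unitors(2)[of ?J] facts by simp
  also have "\<dots> = cv D (fc T (ru D ?J)) (cv D (fcmp T ?J (hun D ?C)) (ch D (fc T q) (fc T p)))"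
    using facts by (intro cv_assoc) simp_all
  also have "\<dots> = cv D (fc T (ru D ?J)) (cv D (fc T (ch D q p)) (fcmp T (hun D ?A) ?J))"
    using fcmp_naturality[of q p] facts by simp
  also have "\<dots> = cv D (fc T (cv D (ru D ?J) (ch D q p))) (fcmp T (hun D ?A) ?J)"
    using facts fc_cv[of "ch D q p" "ru D ?J"] by (simp flip: cv_assoc)
  also have "\<dots> = lu D (fh T ?J)"
    using fcmp_unitors(1)[of ?J] facts by simp
  finally have "cv D (ru D (fh T ?J)) (ch D (fc T q) (fc T p)) = lu D (fh T ?J)" .
  moreover have "cv D (fc T p) (fc T q) = cun D (fv T f)"
    using fc_cv[of q p] facts by simp
  ultimately show ?thesis
    using facts unfolding companion_pair_def by simp
qed

end

locale pointed_lax_endofunctor = normal_lax_endofunctor +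
  fixes \<iota> :: "('v,'c,'o,'h) dtr"
  assumes unit_transformation: "double_transformation D (id_ldf D) T \<iota>"
begin

lemma double_transformation_conjuncts:
  shows to_axioms: "\<forall>A \<in> Ob D. to \<iota> A \<in> Ver D \<and> vdom D (to \<iota> A) = fo (id_ldf D) A \<and> vcod D (to \<iota> A) = fo T A"
    and th_axioms: "\<forall>J \<in> Hor D. th \<iota> J \<in> Cel D \<and> src D (th \<iota> J) = fh (id_ldf D) J \<and> tgt D (th \<iota> J) = fh T J
        \<and> lft D (th \<iota> J) = to \<iota> (hdom D J) \<and> rgt D (th \<iota> J) = to \<iota> (hcod D J)"
    and to_naturality_axiom: "\<forall>f \<in> Ver D.
        vcmp D (to \<iota> (vcod D f)) (fv (id_ldf D) f) = vcmp D (fv T f) (to \<iota> (vdom D f))"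
    and th_naturality_axiom: "\<forall>\<phi> \<in> Cel D.
        cv D (th \<iota> (tgt D \<phi>)) (fc (id_ldf D) \<phi>) = cv D (fc T \<phi>) (th \<iota> (src D \<phi>))"
    and th_hun_axiom: "\<forall>A \<in> Ob D. th \<iota> (hun D A) = cun D (to \<iota> A)"
  using unit_transformation unfolding double_transformation_def by - (elim conjE; assumption)+

lemma unit_boundary[simp]:
  "A \<in> Ob D \<Longrightarrow> to \<iota> A \<in> Ver D"
  "A \<in> Ob D \<Longrightarrow> vdom D (to \<iota> A) = A"
  "A \<in> Ob D \<Longrightarrow> vcod D (to \<iota> A) = fo T A"
  "J \<in> Hor D \<Longrightarrow> th \<iota> J \<in> Cel D"
  "J \<in> Hor D \<Longrightarrow> src D (th \<iota> J) = J"
  "J \<in> Hor D \<Longrightarrow> tgt D (th \<iota> J) = fh T J"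
  "J \<in> Hor D \<Longrightarrow> lft D (th \<iota> J) = to \<iota> (hdom D J)"
  "J \<in> Hor D \<Longrightarrow> rgt D (th \<iota> J) = to \<iota> (hcod D J)"
  "A \<in> Ob D \<Longrightarrow> th \<iota> (hun D A) = cun D (to \<iota> A)"
  using to_axioms th_axioms th_hun_axiom by (simp_all add: id_ldf_def)

lemma unit_naturality:
  "f \<in> Ver D \<Longrightarrow> vcmp D (to \<iota> (vcod D f)) f = vcmp D (fv T f) (to \<iota> (vdom D f))"
  "\<phi> \<in> Cel D \<Longrightarrow> cv D (th \<iota> (tgt D \<phi>)) \<phi> = cv D (fc T \<phi>) (th \<iota> (src D \<phi>))"
  using to_naturality_axiom th_naturality_axiom by (simp_all add: id_ldf_def)

lemma iota_star_boundary:
  assumes cp: "companion_pair D f p q"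
    and cA: "companion_cell D (to \<iota> (vdom D f)) pA" and cC: "companion_cell D (to \<iota> (vcod D f)) pC"
  shows "iota_star D T \<iota> (src D p) pA pC \<in> Cel D"
    "src D (iota_star D T \<iota> (src D p) pA pC) = hcmp D (src D p) (src D pC)"
    "tgt D (iota_star D T \<iota> (src D p) pA pC) = hcmp D (src D pA) (fh T (src D p))"
    "lft D (iota_star D T \<iota> (src D p) pA pC) = vid D (vdom D f)"
    "rgt D (iota_star D T \<iota> (src D p) pA pC) = vid D (fo T (vcod D f))"
  using companion_pairD[OF cp] companion_cellD[OF cA] companion_cellD[OF cC]
    companion_unit_boundary[OF cA]
  unfolding iota_star_def by simp_all

lemma iota_star_comparison:
  assumes cp: "companion_pair D f p q"
    and cA: "companion_cell D (to \<iota> (vdom D f)) pA" and cC: "companion_cell D (to \<iota> (vcod D f)) pC"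
  shows "cv D (companion_comp_cell D pA (fc T p)) (iota_star D T \<iota> (src D p) pA pC)
    = companion_comp_cell D p pC"
proof -
  let ?J = "src D p" and ?A = "vdom D f" and ?C = "vcod D f" and ?Q = "src D pC"
  let ?U = "hun D (fo T ?C)" and ?K = "hcmp D (src D pA) (fh T ?J)"
  let ?c = "companion_comp_cell D pA (fc T p)"
  define qA where "qA = companion_unit D (to \<iota> ?A) pA"
  define \<psi> where "\<psi> = cv D (cun D (to \<iota> ?C)) p"
  let ?M = "ch D (ch D qA (th \<iota> ?J)) pC" and ?N = "ch D (cinv D (lu D ?J)) (cid D ?Q)"
  note facts = companion_pairD[OF cp] companion_pairD[OF companion_cell_pair[OF cA], folded qA_def]
    companion_pairD[OF companion_cell_pair[OF cC]]
  have g: "vcmp D (fv T f) (to \<iota> ?A) = vcmp D (to \<iota> ?C) f"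
    using unit_naturality(1)[of f] facts by simp
  have \<psi>: "\<psi> \<in> Cel D" "src D \<psi> = ?J" "tgt D \<psi> = ?U" "lft D \<psi> = vcmp D (to \<iota> ?C) f"
    "rgt D \<psi> = to \<iota> ?C"
    unfolding \<psi>_def using facts by simp_all
  have c: "?c \<in> Cel D" "src D ?c = ?K" "tgt D ?c = ?U" "rgt D ?c = vid D (fo T ?C)"
    using companion_comp_boundary[OF companion_cell_pair[OF cA] companion_pair_fc[OF cp]] facts by simp_all
  have X: "iota_star D T \<iota> ?J pA pC = cv D (ru D ?K) (cv D ?M ?N)"
    unfolding iota_star_def qA_def using facts by simp
  have unit: "cv D (cv D (cun D (fv T f)) pA) qA = cun D (vcmp D (to \<iota> ?C) f)"
    using facts cun_vcmp[of "to \<iota> ?A" "fv T f"] g by (subst cv_assoc) simp_all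
  have nat: "cv D (fc T p) (th \<iota> ?J) = \<psi>"
    using unit_naturality(2)[of p] facts unfolding \<psi>_def by simp
  have "?c = cv D (lu D ?U) (ch D (cv D (cun D (fv T f)) pA) (fc T p))"
    unfolding companion_comp_cell_def using facts by simp
  then have "cv D ?c (ch D qA (th \<iota> ?J))
      = cv D (lu D ?U) (cv D (ch D (cv D (cun D (fv T f)) pA) (fc T p)) (ch D qA (th \<iota> ?J)))"
    using facts by (simp only:) (intro cv_assoc; simp)
  also have "\<dots> = cv D (lu D ?U) (ch D (cun D (vcmp D (to \<iota> ?C) f)) \<psi>)"
    using interchange[of qA "cv D (cun D (fv T f)) pA" "th \<iota> ?J" "fc T p"] facts unit nat by simp
  also have "\<dots> = cv D \<psi> (lu D ?J)"
    using lu_naturality[of \<psi>] \<psi> by simp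
  finally have whiskered: "cv D ?c (ch D qA (th \<iota> ?J)) = cv D \<psi> (lu D ?J)" .
  have "cv D ?c (iota_star D T \<iota> ?J pA pC) = cv D (cv D ?c (ru D ?K)) (cv D ?M ?N)"
    unfolding X using facts c by (intro cv_assoc[symmetric]) simp_all
  also have "\<dots> = cv D (ru D ?U) (cv D (cv D (ch D ?c (cid D ?U)) ?M) ?N)"
    using ru_naturality[of ?c] facts c by (simp add: cv_assoc)
  also have "\<dots> = cv D (ru D ?U) (cv D (ch D (cv D \<psi> (lu D ?J)) pC) ?N)"
    using interchange[of "ch D qA (th \<iota> ?J)" ?c pC "cid D ?U"] facts c whiskered by simp
  also have "\<dots> = cv D (ru D ?U) (ch D \<psi> pC)"
    using interchange[of "cinv D (lu D ?J)" "cv D \<psi> (lu D ?J)" "cid D ?Q" pC] facts \<psi>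
    by (simp add: cv_assoc)
  also have "\<dots> = companion_comp_cell D p pC"
    unfolding companion_comp_cell_def \<psi>_def using facts lu_hun_eq_ru_hun[of "fo T ?C"] by simp
  finally show ?thesis .
qed

lemma right_BC_companion:
  assumes "companion_cell D f p"
  shows "right_BC D T \<iota> (src D p)"
  unfolding right_BC_def
proof (intro allI impI)
  fix pA pC
  assume "companion_cell D (to \<iota> (hdom D (src D p))) pA" "companion_cell D (to \<iota> (hcod D (src D p))) pC"
  then have cA: "companion_cell D (to \<iota> (vdom D f)) pA" and cC: "companion_cell D (to \<iota> (vcod D f)) pC"
    using companion_cellD[OF assms] by simp_all
  have cp: "companion_pair D f p (companion_unit D f p)" by (rule companion_cell_pair[OF assms])
  note facts = companion_pairD[OF cp]
  have "vcmp D (fv T f) (to \<iota> (vdom D f)) = vcmp D (to \<iota> (vcod D f)) f"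
    using unit_naturality(1)[of f] facts by simp
  from companion_comparison_iso[OF cp companion_cell_pair[OF cC] _ companion_cell_pair[OF cA]
      companion_pair_fc[OF cp] _ this]
  show "iso_cell D (iota_star D T \<iota> (src D p) pA pC)"
    using facts iota_star_boundary[OF cp cA cC] iota_star_comparison[OF cp cA cC] by simp
qed

end

theorem proposition5p6:
  fixes D :: "('o,'v,'h,'c) dblcat"
    and T :: "('o,'v,'h,'c) ldf"
    and \<mu> \<iota> :: "('v,'c,'o,'h) dtr"
  assumes "normal_lax_double_monad D T \<mu> \<iota>"
    and "equipment D"
    and "f \<in> Ver D"
    and "companion_cell D f p"
  shows "right_BC D T \<iota> (src D p)"
proof -
  interpret pointed_lax_endofunctor D T \<iota>
    using assms(1) unfolding normal_lax_double_monad_def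
    by unfold_locales auto
  show ?thesis using assms(4) by (rule right_BC_companion)
qed

end
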